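(* For every cocycle $\tau\in Z^1(\Gamma,{\mathbb R}^{d,1})$ there exists a $C^\infty$ convex (resp. concave) $\tau$-equivariant function $B^d\to{\mathbb R}$. Moreover, if $\tau_n\to\tau$ in $Z^1(\Gamma,{\mathbb R}^{d,1})$, then there exist a $C^\infty$ convex (resp. concave) $\tau$-equivariant function $h$ and $C^\infty$ convex (resp. concave) $\tau_n$-equivariant functions $h_n$ such that $h_n\to h$ pointwise on $B^d$ and all second partial derivatives of $h_n$ converge to those of $h$.
   Context: Notation. $B^d$ denotes the open Euclidean unit ball of ${\mathbb R}^d$; $\langle\cdot,\cdot\rangle_d$ and $\|\cdot\|$ are the Euclidean inner product and norm, and $L(x)=\sqrt{1-\|x\|^2}$. Minkowski space ${\mathbb R}^{d,1}$ is ${\mathbb R}^{d+1}$ with $\langle x,y\rangle_{d,1}=x_1y_1+\dots+x_dy_d-x_{d+1}y_{d+1}$; for $v\in{\mathbb R}^{d,1}$ write $v=(\bar v,v_{d+1})$. $O_+(d,1)$ is the group of linear maps preserving $\langle\cdot,\cdot\rangle_{d,1}$ and the sheet $\{\langle x,x\rangle_{d,1}=-1,\ x_{d+1}>0\}$. For $A\in O_+(d,1)$, $x\in B^d$, $A\cdot x\in B^d$ is the unique point with $A\binom{x}{1}\in{\mathbb R}_{>0}\binom{A\cdot x}{1}$; this is an isometry of the Klein metric $g_{{\mathbb H}^d}(x)(X,Y)=L(x)^{-2}\langle X,Y\rangle_d+L(x)^{-4}\langle x,X\rangle_d\langle x,Y\rangle_d$. Action on functions. $((A,v)h)(x)=\frac{L(x)}{L(A^{-1}\cdot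 x)}h(A^{-1}\cdot x)+\langle x,\bar v\rangle_d-v_{d+1}$. Group setup. $d\ge2$ and $\Gamma\subset O_+(d,1)$ is a subgroup such that the action $x\mapsto A\cdot x$ of $\Gamma$ on $B^d$ is free, properly discontinuous and cocompact. A cocycle is a map $\tau:\Gamma\to{\mathbb R}^{d,1}$ with $\tau(AB)=\tau(A)+A\tau(B)$; they form the finite-dimensional vector space $Z^1(\Gamma,{\mathbb R}^{d,1})$, and $\tau_n\to\tau$ means $\tau_n(A)\to\tau(A)$ for every $A\in\Gamma$. For a cocycle $\tau$, a continuous $h:B^d\to{\mathbb R}$ is $\tau$-equivariant if $(A,\tau(A))h=h$ for all $A\in\Gamma$. *)

theory Defs
  imports "HOL-Analysis.Analysis"
begin

text \<open>Coordinates of R^d are indexed by a finite type 'n (d = CARD('n)).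
  Minkowski space R^{d,1} is modelled as (real^'n) \<times> real, v = (v-bar, v_{d+1}).\<close>

type_synonym 'n mink = "(real^'n) \<times> real"

definition mink_inner :: "'n::finite mink \<Rightarrow> 'n mink \<Rightarrow> real" where
  "mink_inner x y = fst x \<bullet> fst y - snd x * snd y"

definition L :: "real^'n::finite \<Rightarrow> real" where
  "L x = sqrt (1 - norm x ^ 2)"

definition O_plus :: "('n::finite mink \<Rightarrow> 'n mink) set" where
  "O_plus = {A. linear A \<and> (\<forall>x y. mink_inner (A x) (A y) = mink_inner x y)
              \<and> (\<forall>x. mink_inner x x = -1 \<and> snd x > 0 \<longrightarrow> snd (A x) > 0)}"

text \<open>Projective action on the Klein ball: A(x,1) is a positive multiple of (A.x,1).\<close>
definition klein_act :: "('n::finite mink \<Rightarrow> 'n mink) \<Rightarrow> real^'n \<Rightarrow> real^'n" where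
  "klein_act A x = (1 / snd (A (x, 1))) *\<^sub>R fst (A (x, 1))"

definition is_subgroup_O :: "('n::finite mink \<Rightarrow> 'n mink) set \<Rightarrow> bool" where
  "is_subgroup_O G \<longleftrightarrow> G \<subseteq> O_plus \<and> id \<in> G \<and> (\<forall>A\<in>G. \<forall>B\<in>G. A \<circ> B \<in> G)
      \<and> (\<forall>A\<in>G. inv A \<in> G)"

definition acts_freely :: "('n::finite mink \<Rightarrow> 'n mink) set \<Rightarrow> bool" where
  "acts_freely G \<longleftrightarrow> (\<forall>A\<in>G. \<forall>x\<in>ball 0 1. klein_act A x = x \<longrightarrow> A = id)"

definition acts_properly_discontinuously :: "('n::finite mink \<Rightarrow> 'n mink) set \<Rightarrow> bool" where
  "acts_properly_discontinuously G \<longleftrightarrow>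
     (\<forall>K. compact K \<and> K \<subseteq> ball 0 1 \<longrightarrow> finite {A\<in>G. klein_act A ` K \<inter> K \<noteq> {}})"

definition acts_cocompactly :: "('n::finite mink \<Rightarrow> 'n mink) set \<Rightarrow> bool" where
  "acts_cocompactly G \<longleftrightarrow>
     (\<exists>K. compact K \<and> K \<subseteq> ball 0 1 \<and> (\<Union>A\<in>G. klein_act A ` K) = ball 0 1)"

definition cocycle :: "('n::finite mink \<Rightarrow> 'n mink) set \<Rightarrow> (('n mink \<Rightarrow> 'n mink) \<Rightarrow> 'n mink) \<Rightarrow> bool" where
  "cocycle G \<tau> \<longleftrightarrow> (\<forall>A\<in>G. \<forall>B\<in>G. \<tau> (A \<circ> B) = \<tau> A + A (\<tau> B))"

definition fun_act :: "('n::finite mink \<Rightarrow> 'n mink) \<Rightarrow> 'n mink \<Rightarrow> (real^'n \<Rightarrow> real) \<Rightarrow> real^'n \<Rightarrow> real" where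
  "fun_act A v h x = L x / L (klein_act (inv A) x) * h (klein_act (inv A) x) + x \<bullet> fst v - snd v"

definition equivariant :: "('n::finite mink \<Rightarrow> 'n mink) set \<Rightarrow> (('n mink \<Rightarrow> 'n mink) \<Rightarrow> 'n mink)
    \<Rightarrow> (real^'n \<Rightarrow> real) \<Rightarrow> bool" where
  "equivariant G \<tau> h \<longleftrightarrow> continuous_on (ball 0 1) h \<and>
     (\<forall>A\<in>G. \<forall>x\<in>ball 0 1. fun_act A (\<tau> A) h x = h x)"

definition partial_deriv :: "'n::finite \<Rightarrow> (real^'n \<Rightarrow> real) \<Rightarrow> real^'n \<Rightarrow> real" where
  "partial_deriv i f x = frechet_derivative f (at x) (axis i 1)"

fun iter_partial :: "'n::finite list \<Rightarrow> (real^'n \<Rightarrow> real) \<Rightarrow> real^'n \<Rightarrow> real" where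
  "iter_partial [] f = f"
| "iter_partial (i # is) f = partial_deriv i (iter_partial is f)"

definition smooth_on :: "(real^'n::finite) set \<Rightarrow> (real^'n \<Rightarrow> real) \<Rightarrow> bool" where
  "smooth_on S f \<longleftrightarrow> (\<forall>is. iter_partial is f differentiable_on S)"

end

theory Submission
  imports Defs "HOL-Computational_Algebra.Polynomial"
begin

text \<open>Cover the ball by the orbit of a compact set \<open>cball 0 r\<close> and take the smooth partition of
  unity \<open>cutoff A / cutoff_sum\<close> subordinate to the locally finite family of hyperbolic balls
  centred at the orbit of \<open>0\<close>. Averaging the affine functions \<open>x \<mapsto> \<langle>(x, 1), \<tau> A\<rangle>\<close> with
  these weights gives a smooth \<open>\<tau>\<close>-equivariant function, by the cocycle identity. The function
  \<open>- L\<close> is invariant and strictly convex, with Hessian at least the identity; subtracting a large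
  multiple of \<open>L\<close> makes the average convex near \<open>cball 0 r\<close>, and equivariance transports this
  local convexity to the whole ball, since the action preserves convexity. Everything depends
  linearly on finitely many values of \<open>\<tau>\<close> locally, which gives the convergence statement;
  concave functions are negatives of convex ones for \<open>- \<tau>\<close>.\<close>

section \<open>Smooth functions on open subsets of \<open>\<real>\<^sup>n\<close>\<close>

lemma partial_deriv_eqI:
  assumes "(f has_derivative D) (at x)"
  shows "partial_deriv i f x = D (axis i 1)"
  using frechet_derivative_at[OF assms] by (simp add: partial_deriv_def)

lemma has_derivative_sum_partials:
  fixes f :: "real^'n::finite \<Rightarrow> real"
  assumes "f differentiable at x"
  shows "(f has_derivative (\<lambda>v. \<Sum>i\<in>UNIV. v$i * partial_deriv i f x)) (at x)"
proof -
  let ?D = "frechet_derivative f (at x)"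
  have D: "(f has_derivative ?D) (at x)" using assms frechet_derivative_works by blast
  have "?D v = (\<Sum>i\<in>UNIV. v$i * partial_deriv i f x)" for v
  proof -
    have "?D v = ?D (\<Sum>i\<in>UNIV. (v$i) *s axis i 1)" by (simp add: basis_expansion)
    also have "\<dots> = (\<Sum>i\<in>UNIV. v$i * ?D (axis i 1))"
      using has_derivative_linear[OF D] by (simp add: linear_sum linear_scale scalar_mult_eq_scaleR)
    finally show ?thesis by (simp add: partial_deriv_def)
  qed
  then show ?thesis using D by (metis (no_types, lifting) ext)
qed

lemma partial_deriv_cong_open:
  fixes f g :: "real^'n::finite \<Rightarrow> real"
  assumes "open T" "x \<in> T" "\<And>y. y \<in> T \<Longrightarrow> f y = g y" "g differentiable at x"
  shows "partial_deriv i f x = partial_deriv i g x" "f differentiable at x"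
proof -
  obtain D where D: "(g has_derivative D) (at x)" using assms(4) by (auto simp: differentiable_def)
  have "(f has_derivative D) (at x)"
    using has_derivative_transform_within_open[OF D assms(1,2)] assms(3) by metis
  then show "partial_deriv i f x = partial_deriv i g x" "f differentiable at x"
    using D partial_deriv_eqI[of f D x i] partial_deriv_eqI[of g D x i] by (auto simp: differentiable_def)
qed

lemma smooth_on_imp_differentiable_at:
  "smooth_on S f \<Longrightarrow> open S \<Longrightarrow> x \<in> S \<Longrightarrow> iter_partial is f differentiable at x"
  unfolding smooth_on_def by (meson differentiable_on_eq_differentiable_at)

lemma iter_partial_cong_open:
  fixes f g :: "real^'n::finite \<Rightarrow> real"
  assumes "open T" "\<And>y. y \<in> T \<Longrightarrow> f y = g y" "smooth_on T g" "y \<in> T"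
  shows "iter_partial is f y = iter_partial is g y"
  using assms(4)
proof (induction "is" arbitrary: y)
  case Nil then show ?case using assms(2) by simp
next
  case (Cons i "is")
  then show ?case
    using partial_deriv_cong_open(1)[OF assms(1) Cons.prems Cons.IH]
      smooth_on_imp_differentiable_at[OF assms(3,1) Cons.prems] by simp
qed

lemma smooth_on_subset: "smooth_on S f \<Longrightarrow> T \<subseteq> S \<Longrightarrow> smooth_on T f"
  unfolding smooth_on_def using differentiable_on_subset by blast

lemma smooth_on_locally:
  fixes f :: "real^'n::finite \<Rightarrow> real"
  assumes "open S"
    and "\<And>x. x \<in> S \<Longrightarrow> \<exists>T g. open T \<and> x \<in> T \<and> smooth_on T g \<and> (\<forall>y\<in>T. f y = g y)"
  shows "smooth_on S f"
  unfolding smooth_on_def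
proof
  fix "is"
  show "iter_partial is f differentiable_on S"
  proof (rule differentiable_at_imp_differentiable_on)
    fix x assume "x \<in> S"
    then obtain T g where T: "open T" "x \<in> T" "smooth_on T g" "\<forall>y\<in>T. f y = g y"
      using assms(2) by blast
    show "iter_partial is f differentiable at x"
      using partial_deriv_cong_open(2)[OF T(1,2), of "iter_partial is f" "iter_partial is g"]
        iter_partial_cong_open[OF T(1) _ T(3)] T(4) smooth_on_imp_differentiable_at[OF T(3,1,2)]
      by blast
  qed
qed

lemma smooth_on_cong:
  fixes f g :: "real^'n::finite \<Rightarrow> real"
  assumes "open S" "smooth_on S g" "\<And>x. x \<in> S \<Longrightarrow> f x = g x"
  shows "smooth_on S f"
  using assms by (intro smooth_on_locally) blast+

lemma smooth_on_partial_deriv: "smooth_on S f \<Longrightarrow> smooth_on S (partial_deriv i f)"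
proof -
  have "iter_partial is (partial_deriv i f) = iter_partial (is @ [i]) f" for "is"
    by (induction "is") auto
  then show "smooth_on S f \<Longrightarrow> smooth_on S (partial_deriv i f)"
    unfolding smooth_on_def by metis
qed

lemma smooth_on_coinduct:
  fixes X :: "(real^'n::finite \<Rightarrow> real) set"
  assumes "open S"
    and "\<And>f. f \<in> X \<Longrightarrow> f differentiable_on S"
    and "\<And>f i. f \<in> X \<Longrightarrow> \<exists>g\<in>X. \<forall>x\<in>S. partial_deriv i f x = g x"
    and "f \<in> X"
  shows "smooth_on S f"
proof -
  have diff: "g differentiable at x" if "g \<in> X" "x \<in> S" for g x
    using assms(1,2) that by (meson differentiable_on_eq_differentiable_at)
  have represented: "\<forall>f\<in>X. \<exists>g\<in>X. \<forall>x\<in>S. iter_partial is f x = g x" for "is"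
  proof (induction "is")
    case Nil then show ?case by auto
  next
    case (Cons i "is")
    show ?case
    proof
      fix f assume "f \<in> X"
      then obtain g where g: "g \<in> X" "\<forall>x\<in>S. iter_partial is f x = g x" using Cons by blast
      obtain g' where g': "g' \<in> X" "\<forall>x\<in>S. partial_deriv i g x = g' x" using assms(3)[OF g(1)] by blast
      have "\<forall>x\<in>S. iter_partial (i#is) f x = g' x"
        using partial_deriv_cong_open(1)[OF assms(1), of _ "iter_partial is f" g i] g g' diff by simp
      then show "\<exists>g\<in>X. \<forall>x\<in>S. iter_partial (i # is) f x = g x" using g' by blast
    qed
  qed
  show ?thesis unfolding smooth_on_def
  proof
    fix "is"
    obtain g where g: "g \<in> X" "\<forall>x\<in>S. iter_partial is f x = g x" using represented assms(4) by blast
    show "iter_partial is f differentiable_on S"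
      using partial_deriv_cong_open(2)[OF assms(1), of _ "iter_partial is f" g] g diff
      by (intro differentiable_at_imp_differentiable_on) auto
  qed
qed

lemma partial_deriv_const: "partial_deriv i (\<lambda>x::real^'n::finite. c::real) x = 0"
  by (simp add: partial_deriv_def frechet_derivative_const)

lemma partial_deriv_component:
  "partial_deriv i (\<lambda>x::real^'n::finite. x$j) x = (if i = j then 1 else 0)"
proof -
  have "((\<lambda>x::real^'n. x$j) has_derivative (\<lambda>x. x$j)) (at x)"
    using bounded_linear.has_derivative[OF bounded_linear_vec_nth has_derivative_id] by simp
  from partial_deriv_eqI[OF this] show ?thesis by (simp add: axis_def)
qed

lemma partial_deriv_add:
  fixes f g :: "real^'n::finite \<Rightarrow> real"
  assumes "f differentiable at x" "g differentiable at x"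
  shows "partial_deriv i (\<lambda>x. f x + g x) x = partial_deriv i f x + partial_deriv i g x"
proof -
  obtain Df Dg where d: "(f has_derivative Df) (at x)" "(g has_derivative Dg) (at x)"
    using assms by (auto simp: differentiable_def)
  from partial_deriv_eqI[OF has_derivative_add[OF d]] partial_deriv_eqI[OF d(1)] partial_deriv_eqI[OF d(2)]
  show ?thesis by simp
qed

lemma partial_deriv_mult:
  fixes f g :: "real^'n::finite \<Rightarrow> real"
  assumes "f differentiable at x" "g differentiable at x"
  shows "partial_deriv i (\<lambda>x. f x * g x) x = partial_deriv i f x * g x + f x * partial_deriv i g x"
proof -
  obtain Df Dg where d: "(f has_derivative Df) (at x)" "(g has_derivative Dg) (at x)"
    using assms by (auto simp: differentiable_def)
  from partial_deriv_eqI[OF has_derivative_mult[OF d]] partial_deriv_eqI[OF d(1)] partial_deriv_eqI[OF d(2)]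
  show ?thesis by (simp add: algebra_simps)
qed

lemma partial_deriv_cmult:
  fixes f :: "real^'n::finite \<Rightarrow> real"
  assumes "f differentiable at x"
  shows "partial_deriv i (\<lambda>x. c * f x) x = c * partial_deriv i f x"
  using partial_deriv_mult[OF differentiable_const assms, of i] by (simp add: partial_deriv_const)

lemma partial_deriv_sum:
  fixes f :: "'a \<Rightarrow> real^'n::finite \<Rightarrow> real"
  assumes "finite I" "\<And>k. k \<in> I \<Longrightarrow> f k differentiable at x"
  shows "partial_deriv i (\<lambda>x. \<Sum>k\<in>I. f k x) x = (\<Sum>k\<in>I. partial_deriv i (f k) x)"
  using assms
proof (induction I rule: finite_induct)
  case empty then show ?case by (simp add: partial_deriv_const)
next
  case (insert a I)
  then show ?case
    using partial_deriv_add[of "f a" x "\<lambda>x. \<Sum>k\<in>I. f k x" i] by simp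
qed

lemma differentiable_sum_list_at:
  "(\<And>p. p \<in> set ps \<Longrightarrow> F p differentiable at x) \<Longrightarrow> (\<lambda>x. \<Sum>p\<leftarrow>ps. F p x) differentiable at x"
  by (induction ps) auto

lemma partial_deriv_sum_list:
  fixes F :: "'a \<Rightarrow> real^'n::finite \<Rightarrow> real"
  assumes "\<And>p. p \<in> set ps \<Longrightarrow> F p differentiable at x"
  shows "partial_deriv i (\<lambda>x. \<Sum>p\<leftarrow>ps. F p x) x = (\<Sum>p\<leftarrow>ps. partial_deriv i (F p) x)"
proof -
  have "(\<lambda>x. \<Sum>p\<leftarrow>ps. F p x) = (\<lambda>x. \<Sum>k<length ps. F (ps ! k) x)"
    by (simp add: sum_list_sum_nth atLeast0LessThan)
  moreover have "(\<Sum>p\<leftarrow>ps. partial_deriv i (F p) x) = (\<Sum>k<length ps. partial_deriv i (F (ps ! k)) x)"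
    by (simp add: sum_list_sum_nth atLeast0LessThan)
  ultimately show ?thesis
    using partial_deriv_sum[of "{..<length ps}" "\<lambda>k. F (ps ! k)" x i] assms by simp
qed

lemma partial_deriv_compose_real:
  fixes u :: "real^'n::finite \<Rightarrow> real"
  assumes "(P has_real_derivative P') (at (u x))" "u differentiable at x"
  shows "partial_deriv i (\<lambda>x. P (u x)) x = P' * partial_deriv i u x"
    "(\<lambda>x. P (u x)) differentiable at x"
proof -
  obtain Du where d: "(u has_derivative Du) (at x)" using assms by (auto simp: differentiable_def)
  have "((\<lambda>x. P (u x)) has_derivative (\<lambda>h. P' * Du h)) (at x)"
    using has_derivative_compose[OF d assms(1)[unfolded has_field_derivative_def]] by (simp add: o_def)
  from partial_deriv_eqI[OF this] partial_deriv_eqI[OF d] this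
  show "partial_deriv i (\<lambda>x. P (u x)) x = P' * partial_deriv i u x"
    "(\<lambda>x. P (u x)) differentiable at x"
    by (auto simp: differentiable_def)
qed

lemma partial_deriv_compose_real_mult:
  fixes u g :: "real^'n::finite \<Rightarrow> real"
  assumes "(P has_real_derivative P') (at (u x))" "u differentiable at x" "g differentiable at x"
  shows "partial_deriv i (\<lambda>x. P (u x) * g x) x = P' * (partial_deriv i u x * g x) + P (u x) * partial_deriv i g x"
    "(\<lambda>x. P (u x) * g x) differentiable at x"
proof -
  note chain = partial_deriv_compose_real[OF assms(1,2)]
  show "(\<lambda>x. P (u x) * g x) differentiable at x" using chain(2) assms(3) by simp
  show "partial_deriv i (\<lambda>x. P (u x) * g x) x = P' * (partial_deriv i u x * g x) + P (u x) * partial_deriv i g x"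
    using partial_deriv_mult[OF chain(2) assms(3)] chain(1) by (simp add: algebra_simps)
qed

lemma smooth_on_const: "open S \<Longrightarrow> smooth_on S (\<lambda>x::real^'n::finite. c::real)"
  by (rule smooth_on_coinduct[where X="range (\<lambda>(c::real) (x::real^'n). c)"]) (auto simp: partial_deriv_const)

lemma smooth_on_component:
  assumes "open S" shows "smooth_on S (\<lambda>x::real^'n::finite. x$j)"
proof (rule smooth_on_coinduct[OF assms, where X="insert (\<lambda>x. x$j) (range (\<lambda>(c::real) (x::real^'n). c))"])
  fix f assume "f \<in> insert (\<lambda>x. x$j) (range (\<lambda>(c::real) (x::real^'n). c))"
  then show "f differentiable_on S"
    by (auto simp: bounded_linear_imp_differentiable_on bounded_linear_vec_nth)
next
  fix f i assume "f \<in> insert (\<lambda>x. x$j) (range (\<lambda>(c::real) (x::real^'n). c))"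
  then show "\<exists>g\<in>insert (\<lambda>x. x$j) (range (\<lambda>(c::real) (x::real^'n). c)). \<forall>x\<in>S. partial_deriv i f x = g x"
    by (auto simp: partial_deriv_component partial_deriv_const)
qed simp

text \<open>Products are handled through finite sums of products, the smallest class closed under
  the product rule.\<close>

lemma smooth_on_sum_list_mult:
  fixes S :: "(real^'n::finite) set"
  assumes "open S" "\<forall>(f,g)\<in>set ps. smooth_on S f \<and> smooth_on S g"
  shows "smooth_on S (\<lambda>x. \<Sum>(f,g)\<leftarrow>ps. f x * g x)"
proof (rule smooth_on_coinduct[OF assms(1)])
  let ?X = "{(\<lambda>x. \<Sum>(f,g)\<leftarrow>ps. f x * g x) | ps. \<forall>(f,g)\<in>set ps. smooth_on S f \<and> smooth_on S g}"
  show "(\<lambda>x. \<Sum>(f,g)\<leftarrow>ps. f x * g x) \<in> ?X" using assms(2) by blast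
  fix h assume "h \<in> ?X"
  then obtain qs where qs: "h = (\<lambda>x. \<Sum>(f,g)\<leftarrow>qs. f x * g x)"
    "\<forall>(f,g)\<in>set qs. smooth_on S f \<and> smooth_on S g" by blast
  have diff: "f differentiable at x" "g differentiable at x"
    if "(f, g) \<in> set qs" "x \<in> S" for f g x
    using qs(2) that smooth_on_imp_differentiable_at[OF _ assms(1), of _ _ "[]"] by auto
  have diff_term: "(\<lambda>x. case p of (f,g) \<Rightarrow> f x * g x) differentiable at x"
    if "p \<in> set qs" "x \<in> S" for p x
  proof -
    obtain f g where "p = (f, g)" by fastforce
    then show ?thesis using that diff[of f g x] by simp
  qed
  show "h differentiable_on S"
    unfolding qs(1)
    by (intro differentiable_at_imp_differentiable_on differentiable_sum_list_at) (blast intro: diff_term)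
  fix i
  let ?qs' = "concat (map (\<lambda>(f,g). [(partial_deriv i f, g), (f, partial_deriv i g)]) qs)"
  have "\<forall>(f,g)\<in>set ?qs'. smooth_on S f \<and> smooth_on S g"
    using qs(2) by (auto simp: smooth_on_partial_deriv)
  moreover have "partial_deriv i h x = (\<Sum>(f,g)\<leftarrow>?qs'. f x * g x)" if x: "x \<in> S" for x
  proof -
    have "partial_deriv i h x = (\<Sum>p\<leftarrow>qs. partial_deriv i (\<lambda>x. case p of (f,g) \<Rightarrow> f x * g x) x)"
      unfolding qs(1) using partial_deriv_sum_list[of qs "\<lambda>p x. case p of (f,g) \<Rightarrow> f x * g x"] diff_term x
      by (simp add: case_prod_unfold)
    also have "\<dots> = (\<Sum>(f,g)\<leftarrow>qs. partial_deriv i f x * g x + f x * partial_deriv i g x)"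
      by (rule arg_cong[where f=sum_list], rule map_cong[OF refl])
         (auto simp: partial_deriv_mult diff x)
    also have "\<dots> = (\<Sum>(f,g)\<leftarrow>?qs'. f x * g x)"
      by (induction qs) auto
    finally show ?thesis .
  qed
  ultimately show "\<exists>g\<in>?X. \<forall>x\<in>S. partial_deriv i h x = g x"
    by (intro bexI[where x="\<lambda>x. \<Sum>(f,g)\<leftarrow>?qs'. f x * g x"]) blast+
qed

lemma smooth_on_mult:
  "open S \<Longrightarrow> smooth_on S f \<Longrightarrow> smooth_on S g \<Longrightarrow> smooth_on S (\<lambda>x::real^'n::finite. f x * g x)"
  using smooth_on_sum_list_mult[of S "[(f,g)]"] by simp

lemma smooth_on_add:
  fixes f g :: "real^'n::finite \<Rightarrow> real"
  assumes "open S" "smooth_on S f" "smooth_on S g"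
  shows "smooth_on S (\<lambda>x. f x + g x)"
  using smooth_on_sum_list_mult[OF assms(1), of "[(f,\<lambda>x. 1),(g,\<lambda>x. 1)]"] assms
    smooth_on_const[OF assms(1), of 1]
  by simp

lemma smooth_on_cmult:
  "open S \<Longrightarrow> smooth_on S f \<Longrightarrow> smooth_on S (\<lambda>x::real^'n::finite. c * f x)"
  using smooth_on_mult smooth_on_const by blast

lemma smooth_on_minus:
  "open S \<Longrightarrow> smooth_on S f \<Longrightarrow> smooth_on S (\<lambda>x::real^'n::finite. - f x)"
  using smooth_on_cmult[of S f "-1"] by simp

lemma smooth_on_diff:
  fixes f g :: "real^'n::finite \<Rightarrow> real"
  shows "open S \<Longrightarrow> smooth_on S f \<Longrightarrow> smooth_on S g \<Longrightarrow> smooth_on S (\<lambda>x. f x - g x)"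
  using smooth_on_add[of S f "\<lambda>x. - g x"] smooth_on_minus[of S g] by simp

lemma smooth_on_sum:
  assumes "open S" "finite F" "\<And>k. k \<in> F \<Longrightarrow> smooth_on S (f k)"
  shows "smooth_on S (\<lambda>x::real^'n::finite. \<Sum>k\<in>F. f k x)"
  using assms(2,3)
  by (induction F rule: finite_induct) (auto intro: smooth_on_add smooth_on_const assms(1))

definition smooth_real_on :: "real set \<Rightarrow> (real \<Rightarrow> real) \<Rightarrow> bool" where
  "smooth_real_on V P \<longleftrightarrow>
     (\<exists>ds. ds 0 = P \<and> (\<forall>n. \<forall>t\<in>V. (ds n has_real_derivative ds (Suc n) t) (at t)))"

lemma smooth_on_compose_real:
  fixes S :: "(real^'n::finite) set"
  assumes S: "open S" and u: "smooth_on S u" and uV: "\<And>x. x \<in> S \<Longrightarrow> u x \<in> V"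
    and P: "smooth_real_on V P"
  shows "smooth_on S (\<lambda>x. P (u x))"
proof -
  obtain ds where ds: "ds 0 = P" "\<And>n t. t \<in> V \<Longrightarrow> (ds n has_real_derivative ds (Suc n) t) (at t)"
    using P unfolding smooth_real_on_def by blast
  let ?F = "\<lambda>qs x. \<Sum>(n,g)\<leftarrow>qs. ds n (u x) * g x"
  let ?X = "{?F qs | qs. \<forall>(n,g)\<in>set qs. smooth_on S g}"
  have du: "u differentiable at x" if "x \<in> S" for x
    using smooth_on_imp_differentiable_at[OF u S that, of "[]"] by simp
  have diff_term: "(\<lambda>x. ds n (u x) * g x) differentiable at x"
    and partial_term: "partial_deriv i (\<lambda>x. ds n (u x) * g x) x
        = ds (Suc n) (u x) * (partial_deriv i u x * g x) + ds n (u x) * partial_deriv i g x"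
    if "smooth_on S g" "x \<in> S" for n g x i
    using partial_deriv_compose_real_mult[OF ds(2)[OF uV[OF that(2)]] du[OF that(2)]]
      smooth_on_imp_differentiable_at[OF that(1) S that(2), of "[]"] by simp_all
  have "smooth_on S (?F [(0, \<lambda>x. 1)])"
  proof (rule smooth_on_coinduct[OF S, where X="?X"])
    show "?F [(0, \<lambda>x. 1)] \<in> ?X"
      using smooth_on_const[OF S, of 1] by (intro CollectI exI[where x="[(0, \<lambda>x. 1)]"]) auto
    fix h assume "h \<in> ?X"
    then obtain qs where qs: "h = ?F qs" "\<forall>(n,g)\<in>set qs. smooth_on S g" by blast
    have diff_qs: "(\<lambda>x. case p of (n,g) \<Rightarrow> ds n (u x) * g x) differentiable at x"
      if "p \<in> set qs" "x \<in> S" for p x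
      using qs(2) diff_term that by fastforce
    show "h differentiable_on S"
      unfolding qs(1)
      by (intro differentiable_at_imp_differentiable_on differentiable_sum_list_at) (blast intro: diff_qs)
    fix i
    let ?qs' = "concat (map (\<lambda>(n,g). [(Suc n, \<lambda>x. partial_deriv i u x * g x), (n, partial_deriv i g)]) qs)"
    have "\<forall>(n,g)\<in>set ?qs'. smooth_on S g"
      using qs(2) by (auto simp: smooth_on_partial_deriv intro!: smooth_on_mult[OF S] smooth_on_partial_deriv[OF u])
    moreover have "partial_deriv i h x = ?F ?qs' x" if x: "x \<in> S" for x
    proof -
      have "partial_deriv i h x = (\<Sum>p\<leftarrow>qs. partial_deriv i (\<lambda>x. case p of (n,g) \<Rightarrow> ds n (u x) * g x) x)"
        unfolding qs(1) using partial_deriv_sum_list[of qs "\<lambda>p x. case p of (n,g) \<Rightarrow> ds n (u x) * g x"] diff_qs x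
        by (simp add: case_prod_unfold)
      also have "\<dots> = (\<Sum>(n,g)\<leftarrow>qs. ds (Suc n) (u x) * (partial_deriv i u x * g x) + ds n (u x) * partial_deriv i g x)"
        by (rule arg_cong[where f=sum_list], rule map_cong[OF refl]) (use qs(2) partial_term x in auto)
      also have "\<dots> = ?F ?qs' x"
        by (induction qs) auto
      finally show ?thesis .
    qed
    ultimately show "\<exists>g\<in>?X. \<forall>x\<in>S. partial_deriv i h x = g x"
      by (intro bexI[where x="?F ?qs'"]) blast+
  qed
  then show ?thesis using ds(1) by simp
qed

lemma smooth_real_on_powr: "smooth_real_on {0<..} (\<lambda>t. t powr a)"
  unfolding smooth_real_on_def
proof (intro exI[where x="\<lambda>n t. (\<Prod>k<n. (a - real k)) * t powr (a - real n)"] conjI allI ballI)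
  fix n and t :: real assume "t \<in> {0<..}"
  then have "((\<lambda>t. (\<Prod>k<n. (a - real k)) * t powr (a - real n)) has_real_derivative
      (\<Prod>k<n. (a - real k)) * ((a - real n) * t powr (a - real n - 1))) (at t)"
    by (auto intro!: derivative_eq_intros)
  then show "((\<lambda>t. (\<Prod>k<n. (a - real k)) * t powr (a - real n)) has_real_derivative
      (\<Prod>k<Suc n. (a - real k)) * t powr (a - real (Suc n))) (at t)"
    by (simp add: algebra_simps)
qed simp

lemma smooth_on_powr:
  fixes S :: "(real^'n::finite) set"
  assumes "open S" "smooth_on S u" "\<And>x. x \<in> S \<Longrightarrow> u x > 0"
  shows "smooth_on S (\<lambda>x. u x powr a)"
  using smooth_on_compose_real[OF assms(1,2) _ smooth_real_on_powr] assms(3) by simp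

lemma smooth_on_inverse:
  fixes S :: "(real^'n::finite) set"
  assumes "open S" "smooth_on S u" "\<And>x. x \<in> S \<Longrightarrow> u x > 0"
  shows "smooth_on S (\<lambda>x. 1 / u x)"
proof (rule smooth_on_cong[OF assms(1) smooth_on_powr[OF assms, of "-1"]])
  show "1 / u x = u x powr - 1" if "x \<in> S" for x
    using assms(3)[OF that] by (simp add: powr_minus_divide)
qed

section \<open>A smooth bump function\<close>

lemma poly_times_exp_neg_tendsto_0: "((\<lambda>s::real. poly p s * exp (- s)) \<longlongrightarrow> 0) at_top"
proof -
  have "((\<lambda>s::real. \<Sum>i\<le>degree p. coeff p i * (s ^ i / exp s)) \<longlongrightarrow> (\<Sum>i\<le>degree p. coeff p i * 0)) at_top"
    by (intro tendsto_sum tendsto_mult tendsto_const tendsto_power_div_exp_0)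
  moreover have "poly p s * exp (- s) = (\<Sum>i\<le>degree p. coeff p i * (s ^ i / exp s))" for s :: real
    by (simp add: poly_altdef exp_minus divide_inverse sum_distrib_right mult.assoc)
  ultimately show ?thesis by simp
qed

text \<open>On the positive axis the \<open>n\<close>-th derivative of \<open>exp (- 1 / t)\<close> is
  \<open>poly (bump_poly n) (1 / t) * exp (- 1 / t)\<close>.\<close>

fun bump_poly :: "nat \<Rightarrow> real poly" where
  "bump_poly 0 = 1"
| "bump_poly (Suc n) = [:0,0,1:] * (bump_poly n - pderiv (bump_poly n))"

definition bump_deriv :: "nat \<Rightarrow> real \<Rightarrow> real" where
  "bump_deriv n t = (if t \<le> 0 then 0 else poly (bump_poly n) (1/t) * exp (- (1/t)))"

definition bump :: "real \<Rightarrow> real" where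
  "bump t = (if t \<le> 0 then 0 else exp (- (1/t)))"

lemma has_real_derivative_poly_inverse_exp:
  assumes t: "t > 0"
  shows "((\<lambda>t. poly q (1/t) * exp (- (1/t))) has_real_derivative
     poly ([:0,0,1:] * (q - pderiv q)) (1/t) * exp (- (1/t))) (at t)"
proof -
  have inv: "((\<lambda>t. 1/t) has_real_derivative (- ((1/t)^2))) (at t)"
    using t by (auto intro!: derivative_eq_intros simp: power2_eq_square field_simps)
  have "((\<lambda>t. poly q (1/t) * exp (- (1/t))) has_real_derivative
     poly (pderiv q) (1/t) * (- ((1/t)^2)) * exp (- (1/t)) + (exp (- (1/t)) * (- (- ((1/t)^2)))) * poly q (1/t)) (at t)"
    by (intro DERIV_mult DERIV_chain2[OF poly_DERIV inv] DERIV_chain2[OF DERIV_exp DERIV_minus[OF inv]])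
  then show ?thesis by (simp add: algebra_simps power2_eq_square)
qed

lemma bump_deriv_has_real_derivative: "(bump_deriv n has_real_derivative bump_deriv (Suc n) t) (at t)"
proof (cases t "0::real" rule: linorder_cases)
  case less
  have "(bump_deriv n has_real_derivative 0) (at t)"
    by (rule has_field_derivative_transform_within_open[OF DERIV_const, where S="{..<0}"])
       (use less in \<open>auto simp: bump_deriv_def\<close>)
  then show ?thesis using less by (simp add: bump_deriv_def)
next
  case greater
  have "(bump_deriv n has_real_derivative
      poly ([:0,0,1:] * (bump_poly n - pderiv (bump_poly n))) (1/t) * exp (- (1/t))) (at t)"
    by (rule has_field_derivative_transform_within_open[OF has_real_derivative_poly_inverse_exp[OF greater], where S="{0<..}"])
       (use greater in \<open>auto simp: bump_deriv_def\<close>)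
  then show ?thesis using greater by (simp add: bump_deriv_def)
next
  case equal
  have "((\<lambda>y. (bump_deriv n y - bump_deriv n 0) / (y - 0)) \<longlongrightarrow> 0) (at 0)"
  proof (rule filterlim_split_at)
    have "eventually (\<lambda>y. (bump_deriv n y - bump_deriv n 0) / (y - 0) = 0) (at_left (0::real))"
      by (auto simp: bump_deriv_def intro: eventually_mono[OF eventually_at_left_real[of "-1" 0]])
    then show "((\<lambda>y. (bump_deriv n y - bump_deriv n 0) / (y - 0)) \<longlongrightarrow> 0) (at_left 0)"
      by (rule tendsto_eventually)
    have "((\<lambda>y. poly ([:0,1:] * bump_poly n) (inverse y) * exp (- (inverse y))) \<longlongrightarrow> 0) (at_right (0::real))"
      by (rule filterlim_compose[OF poly_times_exp_neg_tendsto_0 filterlim_inverse_at_top_right])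
    moreover have "eventually (\<lambda>y. poly ([:0,1:] * bump_poly n) (inverse y) * exp (- (inverse y))
        = (bump_deriv n y - bump_deriv n 0) / (y - 0)) (at_right (0::real))"
      by (rule eventually_mono[OF eventually_at_right_real[of 0 1]]) (auto simp: bump_deriv_def field_simps)
    ultimately show "((\<lambda>y. (bump_deriv n y - bump_deriv n 0) / (y - 0)) \<longlongrightarrow> 0) (at_right 0)"
      by (rule Lim_transform_eventually)
  qed
  then have "(bump_deriv n has_real_derivative 0) (at 0)" by (simp add: has_field_derivative_iff)
  then show ?thesis using equal by (simp add: bump_deriv_def)
qed

lemma smooth_real_on_bump: "smooth_real_on UNIV bump"
  unfolding smooth_real_on_def
  by (intro exI[where x=bump_deriv] conjI allI ballI bump_deriv_has_real_derivative)
     (auto simp: bump_def bump_deriv_def fun_eq_iff)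

lemma bump_pos: "t > 0 \<Longrightarrow> bump t > 0"
  and bump_nonneg: "bump t \<ge> 0"
  and bump_eq_0: "t \<le> 0 \<Longrightarrow> bump t = 0"
  by (auto simp: bump_def)

lemma iter_partial_sum_cmult:
  fixes f :: "'a \<Rightarrow> real^'n::finite \<Rightarrow> real"
  assumes S: "open S" and I: "finite I" and f: "\<And>k. k \<in> I \<Longrightarrow> smooth_on S (f k)" and y: "y \<in> S"
  shows "iter_partial is (\<lambda>x. \<Sum>k\<in>I. c k * f k x) y = (\<Sum>k\<in>I. c k * iter_partial is (f k) y)"
  using y
proof (induction "is" arbitrary: y)
  case Nil then show ?case by simp
next
  case (Cons i "is")
  have diff: "iter_partial is (f k) differentiable at y" if "k \<in> I" for k
    using smooth_on_imp_differentiable_at[OF f[OF that] S Cons.prems] .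
  have "partial_deriv i (iter_partial is (\<lambda>x. \<Sum>k\<in>I. c k * f k x)) y
      = partial_deriv i (\<lambda>z. \<Sum>k\<in>I. c k * iter_partial is (f k) z) y"
    using diff I Cons.IH by (intro partial_deriv_cong_open(1)[OF S Cons.prems]) auto
  also have "\<dots> = (\<Sum>k\<in>I. c k * iter_partial (i # is) (f k) y)"
    using diff I by (simp add: partial_deriv_sum partial_deriv_cmult)
  finally show ?case by simp
qed

lemma iter_partial_add_cmult:
  fixes f g :: "real^'n::finite \<Rightarrow> real"
  assumes "open S" "smooth_on S f" "smooth_on S g" "y \<in> S"
  shows "iter_partial is (\<lambda>x. a * f x + b * g x) y = a * iter_partial is f y + b * iter_partial is g y"
  using iter_partial_sum_cmult[OF assms(1), where I=UNIV and f="\<lambda>k. if k then f else g"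
      and c="\<lambda>k. if k then a else b" and y=y]
    assms by (simp add: UNIV_bool add.commute)

lemma iter_partial_diff_cmult:
  fixes f g :: "real^'n::finite \<Rightarrow> real"
  assumes "open S" "smooth_on S f" "smooth_on S g" "y \<in> S"
  shows "iter_partial is (\<lambda>x. f x - c * g x) y = iter_partial is f y - c * iter_partial is g y"
  using iter_partial_add_cmult[OF assms, of "is" 1 "-c"] by simp

lemma iter_partial_minus:
  fixes f :: "real^'n::finite \<Rightarrow> real"
  assumes "open S" "smooth_on S f" "y \<in> S"
  shows "iter_partial is (\<lambda>x. - f x) y = - iter_partial is f y"
  using iter_partial_add_cmult[OF assms(1,2,2,3), of "is" "-1" 0] by simp

section \<open>Convexity of smooth functions\<close>

lemma convex_on_segmentsI:
  fixes f :: "'a::real_vector \<Rightarrow> real"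
  assumes "convex W" "\<And>x y. x \<in> W \<Longrightarrow> y \<in> W \<Longrightarrow> convex_on {0..1} (\<lambda>t. f (x + t *\<^sub>R (y - x)))"
  shows "convex_on W f"
  unfolding convex_on_def
proof (intro conjI assms(1) ballI allI impI)
  fix x y and u v :: real assume xy: "x \<in> W" "y \<in> W" and uv: "u \<ge> 0" "v \<ge> 0" "u + v = 1"
  have "f (x + ((1 - v) *\<^sub>R 0 + v *\<^sub>R 1) *\<^sub>R (y - x))
      \<le> (1 - v) * f (x + 0 *\<^sub>R (y - x)) + v * f (x + 1 *\<^sub>R (y - x))"
    using convex_onD[OF assms(2)[OF xy], of v 0 1] uv by auto
  moreover have "x + v *\<^sub>R (y - x) = u *\<^sub>R x + v *\<^sub>R y"
    using uv(3) by (simp add: algebra_simps flip: scaleR_add_left)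
  ultimately show "f (u *\<^sub>R x + v *\<^sub>R y) \<le> u * f x + v * f y"
    using uv(3) by (simp add: eq_diff_eq[symmetric])
qed

lemma convex_on_cong: "(\<And>x. x \<in> S \<Longrightarrow> f x = g x) \<Longrightarrow> convex_on S f \<longleftrightarrow> convex_on S g"
  by (auto simp: convex_on_def convexD)

lemma convex_add_scaleR_diff:
  "convex W \<Longrightarrow> x \<in> W \<Longrightarrow> y \<in> W \<Longrightarrow> t \<in> {0..1} \<Longrightarrow> x + t *\<^sub>R (y - x) \<in> W"
  using convexD[of W x y "1 - t" t] by (auto simp: algebra_simps)

lemma convex_on_line_restrict:
  fixes f :: "'a::real_vector \<Rightarrow> real"
  assumes "convex_on B f" "convex I" "\<And>s. s \<in> I \<Longrightarrow> x + s *\<^sub>R v \<in> B"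
  shows "convex_on I (\<lambda>s. f (x + s *\<^sub>R v))"
  unfolding convex_on_def
proof (intro conjI assms(2) ballI allI impI)
  fix a b and u w :: real assume ab: "a \<in> I" "b \<in> I" and uw: "u \<ge> 0" "w \<ge> 0" "u + w = 1"
  have "x + (u *\<^sub>R a + w *\<^sub>R b) *\<^sub>R v = u *\<^sub>R (x + a *\<^sub>R v) + w *\<^sub>R (x + b *\<^sub>R v)"
    using uw(3) by (simp add: algebra_simps) (metis scaleR_add_left scaleR_one)
  moreover have "f (u *\<^sub>R (x + a *\<^sub>R v) + w *\<^sub>R (x + b *\<^sub>R v)) \<le> u * f (x + a *\<^sub>R v) + w * f (x + b *\<^sub>R v)"
    using assms(1) assms(3)[OF ab(1)] assms(3)[OF ab(2)] uw unfolding convex_on_def by blast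
  ultimately show "f (x + (u *\<^sub>R a + w *\<^sub>R b) *\<^sub>R v) \<le> u * f (x + a *\<^sub>R v) + w * f (x + b *\<^sub>R v)"
    by simp
qed

lemma convex_on_line_near:
  fixes f :: "'a::real_normed_vector \<Rightarrow> real"
  assumes "convex_on (ball (x + t *\<^sub>R v) \<delta>) f" "\<delta> > 0"
  obtains e where "e > 0" "convex_on {t - e <..< t + e} (\<lambda>s. f (x + s *\<^sub>R v))"
    "\<And>s. s \<in> {t - e <..< t + e} \<Longrightarrow> x + s *\<^sub>R v \<in> ball (x + t *\<^sub>R v) \<delta>"
proof -
  define e where "e = \<delta> / (norm v + 1)"
  have e: "e > 0" unfolding e_def using assms(2) by (simp add: add_nonneg_pos)
  have in_ball: "x + s *\<^sub>R v \<in> ball (x + t *\<^sub>R v) \<delta>" if "s \<in> {t - e <..< t + e}" for s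
  proof -
    have "dist (x + t *\<^sub>R v) (x + s *\<^sub>R v) = \<bar>s - t\<bar> * norm v"
      by (simp add: dist_norm abs_minus_commute flip: scaleR_diff_left)
    also have "\<dots> \<le> e * norm v" using that by (intro mult_right_mono) auto
    also have "\<dots> < \<delta>"
      unfolding e_def using assms(2) by (simp add: field_simps add_nonneg_pos add_pos_nonneg)
    finally show ?thesis by simp
  qed
  show thesis
    using that[OF e convex_on_line_restrict[OF assms(1) _ in_ball]] in_ball by simp
qed

text \<open>The derivative of a convex function is nondecreasing, so it cannot have a negative
  derivative.\<close>

lemma second_deriv_nonneg_if_convex_on:
  fixes g :: "real \<Rightarrow> real"
  assumes I: "I = {t - e <..< t + e}" "e > 0" and convex: "convex_on I g"
    and g': "\<And>s. s \<in> I \<Longrightarrow> (g has_real_derivative g' s) (at s)"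
    and g'': "(g' has_real_derivative g'') (at t)"
  shows "g'' \<ge> 0"
proof (rule ccontr)
  assume "\<not> g'' \<ge> 0"
  then obtain d where d: "d > 0" "\<And>h. h > 0 \<Longrightarrow> h < d \<Longrightarrow> g' t > g' (t + h)"
    using DERIV_neg_dec_right[OF g''] by force
  have tI: "t \<in> I" using I by simp
  have interior: "interior I = I" and connected: "connected I" using I by auto
  have mono: "g' s \<ge> g' t" if s: "s \<in> I" "s > t" for s
  proof -
    have "g s - g t \<ge> g' t * (s - t)" "g t - g s \<ge> g' s * (t - s)"
      using convex_on_imp_above_tangent[OF convex connected, of _ _ "g' _"] tI s(1) interior
        g'[THEN has_field_derivative_at_within]
      by auto
    then have "(g' s - g' t) * (s - t) \<ge> 0" by (simp add: algebra_simps)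
    then show ?thesis using s(2) by (simp add: zero_le_mult_iff)
  qed
  define h where "h = min d e / 2"
  have "t + h \<in> I" "h > 0" "h < d" unfolding h_def using I d(1) by auto
  then show False using mono[of "t + h"] d(2)[of h] by simp
qed

lemma smooth_on_line_derivs:
  fixes f :: "real^'n::finite \<Rightarrow> real"
  assumes S: "open S" and f: "smooth_on S f" and z: "x + t *\<^sub>R v \<in> S"
  shows "((\<lambda>t. f (x + t *\<^sub>R v)) has_real_derivative
      (\<Sum>i\<in>UNIV. v$i * partial_deriv i f (x + t *\<^sub>R v))) (at t)"
    "((\<lambda>t. \<Sum>i\<in>UNIV. v$i * partial_deriv i f (x + t *\<^sub>R v)) has_real_derivative
      (\<Sum>i\<in>UNIV. v$i * (\<Sum>j\<in>UNIV. v$j * iter_partial [j,i] f (x + t *\<^sub>R v)))) (at t)"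
proof -
  have line: "((\<lambda>t. g (x + t *\<^sub>R v)) has_real_derivative
      (\<Sum>i\<in>UNIV. v$i * partial_deriv i g (x + t *\<^sub>R v))) (at t)"
    if "g differentiable at (x + t *\<^sub>R v)" for g :: "real^'n \<Rightarrow> real"
  proof -
    have "((\<lambda>t. x + t *\<^sub>R v) has_derivative (\<lambda>h. h *\<^sub>R v)) (at t)"
      by (auto intro!: derivative_eq_intros)
    from has_derivative_compose[OF this has_derivative_sum_partials[OF that]]
    have "((\<lambda>t. g (x + t *\<^sub>R v)) has_derivative
        (\<lambda>h. \<Sum>i\<in>UNIV. (h *\<^sub>R v)$i * partial_deriv i g (x + t *\<^sub>R v))) (at t)"
      by (simp add: o_def)
    moreover have "(\<lambda>h. \<Sum>i\<in>UNIV. (h *\<^sub>R v)$i * partial_deriv i g (x + t *\<^sub>R v))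
        = (*) (\<Sum>i\<in>UNIV. v$i * partial_deriv i g (x + t *\<^sub>R v))"
      by (simp add: fun_eq_iff sum_distrib_left algebra_simps)
    ultimately show ?thesis by (simp add: has_field_derivative_def)
  qed
  show "((\<lambda>t. f (x + t *\<^sub>R v)) has_real_derivative
      (\<Sum>i\<in>UNIV. v$i * partial_deriv i f (x + t *\<^sub>R v))) (at t)"
    using line smooth_on_imp_differentiable_at[OF f S z, of "[]"] by simp
  show "((\<lambda>t. \<Sum>i\<in>UNIV. v$i * partial_deriv i f (x + t *\<^sub>R v)) has_real_derivative
      (\<Sum>i\<in>UNIV. v$i * (\<Sum>j\<in>UNIV. v$j * iter_partial [j,i] f (x + t *\<^sub>R v)))) (at t)"
    using line smooth_on_imp_differentiable_at[OF f S z, of "[_]"]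
    by (intro DERIV_sum DERIV_cmult) simp
qed

lemma convex_on_if_locally_convex:
  fixes f :: "real^'n::finite \<Rightarrow> real"
  assumes S: "open S" "convex S" and f: "smooth_on S f"
    and local: "\<And>z. z \<in> S \<Longrightarrow> \<exists>\<delta>>0. convex_on (ball z \<delta>) f"
  shows "convex_on S f"
proof (rule convex_on_segmentsI[OF S(2)])
  fix x y assume xy: "x \<in> S" "y \<in> S"
  define v where "v = y - x"
  define g1 where "g1 = (\<lambda>t. \<Sum>i\<in>UNIV. v$i * partial_deriv i f (x + t *\<^sub>R v))"
  define g2 where "g2 = (\<lambda>t. \<Sum>i\<in>UNIV. v$i * (\<Sum>j\<in>UNIV. v$j * iter_partial [j,i] f (x + t *\<^sub>R v)))"
  have zS: "x + t *\<^sub>R v \<in> S" if "t \<in> {0..1}" for t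
    unfolding v_def using convex_add_scaleR_diff[OF S(2) xy that] .
  have d1: "((\<lambda>t. f (x + t *\<^sub>R v)) has_real_derivative g1 t) (at t)"
    and d2: "(g1 has_real_derivative g2 t) (at t)" if "x + t *\<^sub>R v \<in> S" for t
    unfolding g1_def g2_def using smooth_on_line_derivs[OF S(1) f that] by blast+
  have g2_nonneg: "g2 t \<ge> 0" if t: "t \<in> {0..1}" for t
  proof -
    obtain \<delta> where \<delta>: "\<delta> > 0" "convex_on (ball (x + t *\<^sub>R v) \<delta>) f" "ball (x + t *\<^sub>R v) \<delta> \<subseteq> S"
    proof -
      obtain \<delta>1 where \<delta>1: "\<delta>1 > 0" "convex_on (ball (x + t *\<^sub>R v) \<delta>1) f"
        using local[OF zS[OF t]] by blast
      obtain \<delta>0 where \<delta>0: "\<delta>0 > 0" "ball (x + t *\<^sub>R v) \<delta>0 \<subseteq> S"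
        using S(1) zS[OF t] open_contains_ball by blast
      have "ball (x + t *\<^sub>R v) (min \<delta>0 \<delta>1) \<subseteq> ball (x + t *\<^sub>R v) \<delta>0"
        "ball (x + t *\<^sub>R v) (min \<delta>0 \<delta>1) \<subseteq> ball (x + t *\<^sub>R v) \<delta>1"
        by (simp_all add: subset_ball)
      then show thesis
        using that[of "min \<delta>0 \<delta>1"] \<delta>0 \<delta>1 convex_on_subset[OF \<delta>1(2)] by simp
    qed
    obtain e where e: "e > 0" "convex_on {t - e <..< t + e} (\<lambda>s. f (x + s *\<^sub>R v))"
      and in_ball: "\<And>s. s \<in> {t - e <..< t + e} \<Longrightarrow> x + s *\<^sub>R v \<in> ball (x + t *\<^sub>R v) \<delta>"
      using convex_on_line_near[OF \<delta>(2,1)] by blast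
    show ?thesis
    proof (rule second_deriv_nonneg_if_convex_on[OF refl e])
      show "((\<lambda>s. f (x + s *\<^sub>R v)) has_real_derivative g1 s) (at s)" if "s \<in> {t - e <..< t + e}" for s
        using in_ball[OF that] \<delta>(3) by (intro d1) blast
      show "(g1 has_real_derivative g2 t) (at t)" using d2 zS[OF t] .
    qed
  qed
  show "convex_on {0..1} (\<lambda>t. f (x + t *\<^sub>R (y - x)))"
    unfolding v_def[symmetric]
  proof (rule f''_ge0_imp_convex[where f'=g1 and f''=g2])
    fix t :: real assume t: "t \<in> {0..1}"
    show "((\<lambda>t. f (x + t *\<^sub>R v)) has_real_derivative g1 t) (at t)"
      "(g1 has_real_derivative g2 t) (at t)" "g2 t \<ge> 0"
      using d1[OF zS[OF t]] d2[OF zS[OF t]] g2_nonneg[OF t] by simp_all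
  qed simp
qed

lemma L_pos: "norm (x::real^'n::finite) < 1 \<Longrightarrow> L x > 0"
  by (simp add: L_def abs_square_less_1)

lemma L_le_1: "L x \<le> 1"
  by (simp add: L_def)

lemma L_power2: "norm (x::real^'n::finite) < 1 \<Longrightarrow> (L x)^2 = 1 - norm x ^ 2"
  unfolding L_def by (simp add: abs_square_less_1 less_imp_le power_less_one_iff)

lemma norm_add_scaleR_power2:
  fixes x v :: "'a::real_inner"
  shows "norm (x + t *\<^sub>R v) ^ 2 = norm x ^ 2 + 2 * t * (x \<bullet> v) + t^2 * norm v ^ 2"
  by (simp only: power2_norm_eq_inner)
     (simp add: inner_add_left inner_add_right inner_commute algebra_simps power2_eq_square)

text \<open>Along a line, \<open>- L\<close> has second derivative at least \<open>norm v ^ 2\<close>: the hyperboloid is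
  uniformly convex in the Klein chart.\<close>

lemma has_real_derivative_neg_L_line:
  fixes x v :: "real^'n::finite"
  defines "a \<equiv> \<lambda>t. x \<bullet> v + t * norm v ^ 2"
  assumes inside: "norm (x + t *\<^sub>R v) < 1"
  shows "((\<lambda>t. - L (x + t *\<^sub>R v)) has_real_derivative a t / L (x + t *\<^sub>R v)) (at t)"
    "((\<lambda>t. a t / L (x + t *\<^sub>R v)) has_real_derivative
        norm v ^ 2 / L (x + t *\<^sub>R v) + (a t)^2 / L (x + t *\<^sub>R v) ^ 3) (at t)"
proof -
  define q where "q = (\<lambda>t. 1 - (norm x ^ 2 + 2 * t * (x \<bullet> v) + t^2 * norm v ^ 2))"
  have Lq: "L (x + s *\<^sub>R v) = sqrt (q s)" for s
    unfolding L_def q_def norm_add_scaleR_power2 ..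
  have q: "q t > 0"
    using inside unfolding q_def norm_add_scaleR_power2[symmetric] by (simp add: abs_square_less_1)
  have dq: "(q has_real_derivative - 2 * a t) (at t)"
    unfolding q_def a_def by (auto intro!: derivative_eq_intros simp: algebra_simps)
  have ds: "((\<lambda>t. sqrt (q t)) has_real_derivative - a t / sqrt (q t)) (at t)"
    using DERIV_chain2[OF DERIV_real_sqrt[OF q] dq] q by (simp add: field_simps)
  show "((\<lambda>t. - L (x + t *\<^sub>R v)) has_real_derivative a t / L (x + t *\<^sub>R v)) (at t)"
    unfolding Lq using DERIV_minus[OF ds] by simp
  have da: "(a has_real_derivative norm v ^ 2) (at t)"
    unfolding a_def by (auto intro!: derivative_eq_intros)
  have "((\<lambda>t. a t / sqrt (q t)) has_real_derivative
      (norm v ^ 2 * sqrt (q t) - (- a t / sqrt (q t)) * a t) / (sqrt (q t) * sqrt (q t))) (at t)"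
    using DERIV_divide[OF da ds] q by simp
  moreover have "(norm v ^ 2 * sqrt (q t) - (- a t / sqrt (q t)) * a t) / (sqrt (q t) * sqrt (q t))
      = norm v ^ 2 / sqrt (q t) + (a t)^2 / sqrt (q t) ^ 3"
    using q by (simp add: field_simps power2_eq_square power3_eq_cube)
  ultimately show "((\<lambda>t. a t / L (x + t *\<^sub>R v)) has_real_derivative
      norm v ^ 2 / L (x + t *\<^sub>R v) + (a t)^2 / L (x + t *\<^sub>R v) ^ 3) (at t)"
    unfolding Lq by simp
qed

lemma quadratic_form_lower_bound:
  fixes v :: "real^'n::finite"
  assumes "\<And>i j. \<bar>h i j\<bar> \<le> M"
  shows "(\<Sum>i\<in>UNIV. v$i * (\<Sum>j\<in>UNIV. v$j * h i j)) \<ge> - (real CARD('n)^2 * M * norm v ^ 2)"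
proof -
  have M: "M \<ge> 0" using assms[of undefined undefined] by linarith
  have entry: "\<bar>v$i * (v$j * h i j)\<bar> \<le> M * norm v ^ 2" for i j
  proof -
    have "\<bar>v$i * (v$j * h i j)\<bar> = \<bar>v$i\<bar> * \<bar>v$j\<bar> * \<bar>h i j\<bar>" by (simp add: abs_mult)
    also have "\<dots> \<le> norm v * norm v * M"
      using M by (intro mult_mono component_le_norm_cart assms) auto
    finally show ?thesis by (simp add: power2_eq_square mult.commute)
  qed
  have "\<bar>\<Sum>i\<in>UNIV. v$i * (\<Sum>j\<in>UNIV. v$j * h i j)\<bar> = \<bar>\<Sum>i\<in>UNIV. \<Sum>j\<in>UNIV. v$i * (v$j * h i j)\<bar>"
    by (simp add: sum_distrib_left)
  also have "\<dots> \<le> (\<Sum>i\<in>(UNIV::'n set). \<Sum>j\<in>(UNIV::'n set). M * norm v ^ 2)"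
    by (rule order_trans[OF sum_abs sum_mono], rule order_trans[OF sum_abs sum_mono]) (rule entry)
  also have "\<dots> = real CARD('n)^2 * M * norm v ^ 2" by (simp add: power2_eq_square)
  finally show ?thesis by linarith
qed

lemma convex_on_diff_cmult_L:
  fixes f :: "real^'n::finite \<Rightarrow> real"
  assumes S: "open S" and W: "W \<subseteq> S" "convex W" "W \<subseteq> ball 0 1" and f: "smooth_on S f"
    and hessian: "\<And>z i j. z \<in> W \<Longrightarrow> \<bar>iter_partial [j,i] f z\<bar> \<le> M"
    and c: "c \<ge> real CARD('n)^2 * M"
  shows "convex_on W (\<lambda>z. f z - c * L z)"
proof (rule convex_on_segmentsI[OF W(2)])
  fix x y assume xy: "x \<in> W" "y \<in> W"
  define v where "v = y - x"
  define a where "a = (\<lambda>t. x \<bullet> v + t * norm v ^ 2)"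
  define D1 where "D1 = (\<lambda>t. \<Sum>i\<in>UNIV. v$i * partial_deriv i f (x + t *\<^sub>R v))"
  define D2 where "D2 = (\<lambda>t. \<Sum>i\<in>UNIV. v$i * (\<Sum>j\<in>UNIV. v$j * iter_partial [j,i] f (x + t *\<^sub>R v)))"
  have M: "M \<ge> 0" using hessian[OF xy(1), of undefined undefined] by linarith
  have c_nonneg: "c \<ge> 0" using c M by (meson order_trans zero_le_mult_iff zero_le_power2 of_nat_0_le_iff)
  have zW: "x + t *\<^sub>R v \<in> W" if "t \<in> {0..1}" for t
    unfolding v_def using convex_add_scaleR_diff[OF W(2) xy that] .
  show "convex_on {0..1} (\<lambda>t. f (x + t *\<^sub>R (y - x)) - c * L (x + t *\<^sub>R (y - x)))"
    unfolding v_def[symmetric]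
  proof (rule f''_ge0_imp_convex[where f' = "\<lambda>t. D1 t + c * (a t / L (x + t *\<^sub>R v))"
        and f'' = "\<lambda>t. D2 t + c * (norm v ^ 2 / L (x + t *\<^sub>R v) + (a t)^2 / L (x + t *\<^sub>R v) ^ 3)"])
    fix t :: real assume t: "t \<in> {0..1}"
    have inside: "norm (x + t *\<^sub>R v) < 1" using zW[OF t] W(3) by auto
    have zS: "x + t *\<^sub>R v \<in> S" using zW[OF t] W(1) by auto
    note f_derivs = smooth_on_line_derivs[OF S f zS]
    note L_derivs = has_real_derivative_neg_L_line[OF inside]
    show "((\<lambda>t. f (x + t *\<^sub>R v) - c * L (x + t *\<^sub>R v)) has_real_derivative
        D1 t + c * (a t / L (x + t *\<^sub>R v))) (at t)"
      unfolding D1_def a_def using DERIV_add[OF f_derivs(1) DERIV_cmult[OF L_derivs(1), of c]] by simp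
    show "((\<lambda>t. D1 t + c * (a t / L (x + t *\<^sub>R v))) has_real_derivative
        D2 t + c * (norm v ^ 2 / L (x + t *\<^sub>R v) + (a t)^2 / L (x + t *\<^sub>R v) ^ 3)) (at t)"
      unfolding D1_def D2_def a_def using DERIV_add[OF f_derivs(2) DERIV_cmult[OF L_derivs(2), of c]]
      by simp
    have "D2 t \<ge> - (real CARD('n)^2 * M * norm v ^ 2)"
      unfolding D2_def by (rule quadratic_form_lower_bound) (use hessian[OF zW[OF t]] in auto)
    moreover have "norm v ^ 2 / L (x + t *\<^sub>R v) + (a t)^2 / L (x + t *\<^sub>R v) ^ 3 \<ge> norm v ^ 2"
      using L_pos[OF inside] L_le_1[of "x + t *\<^sub>R v"]
      by (intro add_increasing2) (simp_all add: le_divide_eq mult_left_le)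
    then have "c * (norm v ^ 2 / L (x + t *\<^sub>R v) + (a t)^2 / L (x + t *\<^sub>R v) ^ 3) \<ge> c * norm v ^ 2"
      using c_nonneg by (rule mult_left_mono)
    moreover have "c * norm v ^ 2 \<ge> real CARD('n)^2 * M * norm v ^ 2"
      using c by (simp add: mult_right_mono)
    ultimately show "0 \<le> D2 t + c * (norm v ^ 2 / L (x + t *\<^sub>R v) + (a t)^2 / L (x + t *\<^sub>R v) ^ 3)"
      by linarith
  qed simp
qed

section \<open>The Klein model\<close>

lemma mink_inner_scaleR_left: "mink_inner (c *\<^sub>R p) q = c * mink_inner p q"
  and mink_inner_scaleR_right: "mink_inner p (c *\<^sub>R q) = c * mink_inner p q"
  and mink_inner_add_left: "mink_inner (p + p') q = mink_inner p q + mink_inner p' q"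
  and mink_inner_add_right: "mink_inner p (q + q') = mink_inner p q + mink_inner p q'"
  by (simp_all add: mink_inner_def algebra_simps inner_add_left inner_add_right)

lemma mink_inner_Pair_1: "mink_inner (x, 1) v = x \<bullet> fst v - snd v"
  by (simp add: mink_inner_def)

lemma mink_inner_Pair_1_self: "mink_inner (x, 1) (x, 1) = norm x ^ 2 - 1"
  by (simp add: mink_inner_def power2_norm_eq_inner)

lemma O_plusD:
  assumes "A \<in> O_plus"
  shows "linear A" "mink_inner (A p) (A q) = mink_inner p q"
    "mink_inner p p = -1 \<Longrightarrow> snd p > 0 \<Longrightarrow> snd (A p) > 0"
  using assms unfolding O_plus_def by blast+

lemma O_plus_bij:
  fixes A :: "'n::finite mink \<Rightarrow> 'n mink"
  assumes A: "A \<in> O_plus"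
  shows "bij A"
proof -
  have "p = 0" if "A p = 0" for p
  proof -
    have "mink_inner p (fst p, - snd p) = mink_inner (A p) (A (fst p, - snd p))"
      using O_plusD(2)[OF A] by simp
    then have "fst p \<bullet> fst p + snd p * snd p = 0" using that by (simp add: mink_inner_def)
    then show "p = 0"
      by (metis add_nonneg_eq_0_iff inner_eq_zero_iff inner_ge_zero mult_eq_0_iff zero_le_square prod_eq_iff
          fst_zero snd_zero)
  qed
  then have "inj A" using O_plusD(1)[OF A] by (simp add: linear_inj_iff_eq_0)
  then show ?thesis
    using linear_injective_imp_surjective[OF O_plusD(1)[OF A]] by (simp add: bij_def)
qed

lemma O_plus_inv:
  fixes A :: "'n::finite mink \<Rightarrow> 'n mink"
  assumes "A \<in> O_plus"
  shows "A (inv A p) = p" "inv A \<circ> A = id" "A \<circ> inv A = id"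
  using O_plus_bij[OF assms] by (auto simp: bij_def surj_f_inv_f fun_eq_iff)

text \<open>The positive factor with \<open>A (x, 1) = klein_factor A x *\<^sub>R (klein_act A x, 1)\<close>.\<close>

definition klein_factor :: "('n::finite mink \<Rightarrow> 'n mink) \<Rightarrow> real^'n \<Rightarrow> real" where
  "klein_factor A x = snd (A (x, 1))"

lemma klein_factor_pos:
  fixes A :: "'n::finite mink \<Rightarrow> 'n mink"
  assumes A: "A \<in> O_plus" and x: "norm x < 1"
  shows "klein_factor A x > 0"
proof -
  have Lx: "L x > 0" using L_pos[OF x] .
  let ?p = "(1 / L x) *\<^sub>R (x, 1::real)"
  have "mink_inner ?p ?p = (1 / L x)^2 * (norm x ^ 2 - 1)"
    unfolding mink_inner_scaleR_left mink_inner_scaleR_right mink_inner_Pair_1_self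
    by (simp add: power2_eq_square)
  also have "\<dots> = -1" using L_power2[OF x] Lx by (simp add: field_simps)
  finally have "snd (A ?p) > 0" using O_plusD(3)[OF A] Lx by simp
  moreover have "A ?p = (1 / L x) *\<^sub>R A (x, 1)" by (rule linear_scale[OF O_plusD(1)[OF A]])
  ultimately show ?thesis using Lx by (simp add: klein_factor_def zero_less_divide_iff)
qed

lemma O_plus_apply_Pair_1:
  fixes A :: "'n::finite mink \<Rightarrow> 'n mink"
  assumes "A \<in> O_plus" "norm x < 1"
  shows "A (x, 1) = klein_factor A x *\<^sub>R (klein_act A x, 1)"
  using klein_factor_pos[OF assms] by (simp add: klein_factor_def klein_act_def prod_eq_iff)

lemma
  fixes A :: "'n::finite mink \<Rightarrow> 'n mink"
  assumes A: "A \<in> O_plus" and x: "norm x < 1"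
  shows norm_klein_act_less_1: "norm (klein_act A x) < 1"
    and L_klein_act: "L (klein_act A x) = L x / klein_factor A x"
proof -
  define s where "s = klein_factor A x"
  define y where "y = klein_act A x"
  have s: "s > 0" unfolding s_def using klein_factor_pos[OF A x] .
  have "norm x ^ 2 - 1 = mink_inner (A (x,1)) (A (x,1))"
    using O_plusD(2)[OF A] mink_inner_Pair_1_self by metis
  also have "\<dots> = s^2 * (norm y ^ 2 - 1)"
    unfolding s_def y_def O_plus_apply_Pair_1[OF A x] mink_inner_scaleR_left mink_inner_scaleR_right
      mink_inner_Pair_1_self
    by (simp add: power2_eq_square)
  finally have y2: "norm y ^ 2 = 1 - (1 - norm x ^ 2) / s^2" using s by (simp add: field_simps)
  have "1 - norm x ^ 2 > 0" using x by (simp add: abs_square_less_1)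
  then have "norm y ^ 2 < 1" unfolding y2 using s by simp
  then show "norm (klein_act A x) < 1" unfolding y_def by (simp add: abs_square_less_1)
  have "L y = sqrt ((1 - norm x ^ 2) / s^2)" unfolding L_def y2 by simp
  also have "\<dots> = L x / s" unfolding L_def using s by (simp add: real_sqrt_divide)
  finally show "L (klein_act A x) = L x / klein_factor A x" unfolding y_def s_def .
qed

lemma klein_act_compose:
  fixes A B :: "'n::finite mink \<Rightarrow> 'n mink"
  assumes A: "A \<in> O_plus" and B: "B \<in> O_plus" and x: "norm x < 1"
  shows "klein_act (A \<circ> B) x = klein_act A (klein_act B x)"
proof -
  have y: "norm (klein_act B x) < 1" using norm_klein_act_less_1[OF B x] .
  have "(A \<circ> B) (x, 1) = klein_factor B x *\<^sub>R A (klein_act B x, 1)"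
    unfolding o_def O_plus_apply_Pair_1[OF B x] by (rule linear_scale[OF O_plusD(1)[OF A]])
  also have "\<dots> = (klein_factor B x * klein_factor A (klein_act B x)) *\<^sub>R (klein_act A (klein_act B x), 1)"
    using O_plus_apply_Pair_1[OF A y] by simp
  finally show ?thesis
    using klein_factor_pos[OF B x] klein_factor_pos[OF A y] unfolding klein_act_def[of "A \<circ> B" x] by simp
qed

lemma klein_act_inv_cancel:
  fixes A :: "'n::finite mink \<Rightarrow> 'n mink"
  assumes A: "A \<in> O_plus" and Ai: "inv A \<in> O_plus" and x: "norm x < 1"
  shows "klein_act (inv A) (klein_act A x) = x"
  using klein_act_compose[OF Ai A x] O_plus_inv(2)[OF A] by (simp add: klein_act_def)

lemma mink_inner_klein_act_inv:
  fixes B :: "'n::finite mink \<Rightarrow> 'n mink"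
  assumes B: "B \<in> O_plus" and Bi: "inv B \<in> O_plus" and x: "norm x < 1"
  shows "mink_inner (klein_act (inv B) x, 1) v = mink_inner (x, 1) (B v) / klein_factor (inv B) x"
proof -
  have "(klein_act (inv B) x, 1) = (1 / klein_factor (inv B) x) *\<^sub>R inv B (x, 1)"
    using O_plus_apply_Pair_1[OF Bi x] klein_factor_pos[OF Bi x] by simp
  moreover have "mink_inner (inv B (x, 1)) v = mink_inner (x, 1) (B v)"
    using O_plusD(2)[OF B, of "inv B (x, 1)" v] O_plus_inv(1)[OF B] by simp
  ultimately show ?thesis by (simp add: mink_inner_scaleR_left)
qed

lemma fun_act_eq_klein_factor:
  fixes B :: "'n::finite mink \<Rightarrow> 'n mink"
  assumes "inv B \<in> O_plus" "norm x < 1"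
  shows "fun_act B v h x = klein_factor (inv B) x * h (klein_act (inv B) x) + mink_inner (x, 1) v"
  using L_klein_act[OF assms] L_pos[OF assms(2)] klein_factor_pos[OF assms]
  by (simp add: fun_act_def mink_inner_Pair_1)

lemma smooth_on_norm_power2: "open S \<Longrightarrow> smooth_on S (\<lambda>x::real^'n::finite. norm x ^ 2)"
  by (rule smooth_on_cong[of S "\<lambda>x. \<Sum>i\<in>UNIV. x$i * x$i"])
     (auto intro!: smooth_on_sum smooth_on_mult smooth_on_component simp: power2_norm_eq_inner inner_vec_def)

lemma smooth_on_mink_inner_Pair_1: "open S \<Longrightarrow> smooth_on S (\<lambda>x::real^'n::finite. mink_inner (x, 1) v)"
  by (rule smooth_on_cong[of S "\<lambda>x. (\<Sum>i\<in>UNIV. x$i * fst v $ i) - snd v"])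
     (auto intro!: smooth_on_diff smooth_on_sum smooth_on_mult smooth_on_component smooth_on_const
       simp: mink_inner_def inner_vec_def)

lemma smooth_on_L: "smooth_on (ball 0 1) (L :: real^'n::finite \<Rightarrow> real)"
proof (rule smooth_on_cong[OF open_ball])
  have pos: "1 - norm x ^ 2 > 0" if "x \<in> ball (0::real^'n) 1" for x
    using that by (simp add: abs_square_less_1)
  show "smooth_on (ball 0 1) (\<lambda>x::real^'n. (1 - norm x ^ 2) powr (1/2))"
    by (intro smooth_on_powr smooth_on_diff smooth_on_const smooth_on_norm_power2 open_ball pos)
  show "L x = (1 - norm x ^ 2) powr (1/2)" if "x \<in> ball 0 1" for x :: "real^'n"
    using pos[OF that] by (simp add: L_def powr_half_sqrt)
qed

definition base_point :: "'n::finite mink" where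
  "base_point = (0, 1)"

lemma O_plus_base_point:
  fixes A :: "'n::finite mink \<Rightarrow> 'n mink"
  assumes "A \<in> O_plus"
  shows "snd (A base_point) > 0" "mink_inner (A base_point) (A base_point) = -1"
  using O_plusD(2)[OF assms, of base_point base_point] O_plusD(3)[OF assms, of base_point] by (auto simp: base_point_def mink_inner_def)

text \<open>The hyperbolic cosine of the distance from \<open>x\<close> to the orbit point \<open>A\<cdot>0\<close>.\<close>

definition cosh_dist :: "('n::finite mink \<Rightarrow> 'n mink) \<Rightarrow> real^'n \<Rightarrow> real" where
  "cosh_dist A x = - mink_inner (x, 1) (A base_point) / L x"

definition cutoff :: "real \<Rightarrow> ('n::finite mink \<Rightarrow> 'n mink) \<Rightarrow> real^'n \<Rightarrow> real" where
  "cutoff R A x = bump (R - cosh_dist A x)"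

lemma cutoff_nonneg: "cutoff R A x \<ge> 0"
  unfolding cutoff_def by (rule bump_nonneg)

lemma smooth_on_cutoff: "smooth_on (ball 0 1) (cutoff R A :: real^'n::finite \<Rightarrow> real)"
proof -
  have "smooth_on (ball 0 1) (\<lambda>x::real^'n. - (mink_inner (x, 1) (A base_point) * (1 / L x)))"
    by (intro smooth_on_minus smooth_on_mult smooth_on_mink_inner_Pair_1 smooth_on_inverse
        smooth_on_L open_ball) (simp add: L_pos)
  then have "smooth_on (ball 0 1) (cosh_dist A :: real^'n \<Rightarrow> real)"
    by (rule smooth_on_cong[OF open_ball]) (simp add: cosh_dist_def)
  then show ?thesis
    unfolding cutoff_def[abs_def]
    by (intro smooth_on_compose_real[OF open_ball _ _ smooth_real_on_bump] smooth_on_diff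
        smooth_on_const open_ball) auto
qed

lemma cosh_dist_klein_act_inv:
  fixes B :: "'n::finite mink \<Rightarrow> 'n mink"
  assumes "B \<in> O_plus" "inv B \<in> O_plus" and x: "norm x < 1"
  shows "cosh_dist A (klein_act (inv B) x) = cosh_dist (B \<circ> A) x"
  using mink_inner_klein_act_inv[OF assms] L_klein_act[OF assms(2) x] L_pos[OF x]
    klein_factor_pos[OF assms(2) x]
  by (simp add: cosh_dist_def)

lemma cutoff_klein_act_inv:
  fixes B :: "'n::finite mink \<Rightarrow> 'n mink"
  assumes "B \<in> O_plus" "inv B \<in> O_plus" "norm x < 1"
  shows "cutoff R A (klein_act (inv B) x) = cutoff R (B \<circ> A) x"
  unfolding cutoff_def cosh_dist_klein_act_inv[OF assms] ..

text \<open>If the cutoff of \<open>A\<close> is nonzero somewhere in \<open>cball 0 \<rho>\<close>, then \<open>A\<cdot>0\<close> is at bounded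
  hyperbolic distance from \<open>0\<close>: the time coordinate of \<open>A base_point\<close> is below \<open>R / (1 - \<rho>)\<close>.\<close>

lemma norm_klein_act_0_le_if_cutoff:
  fixes A :: "'n::finite mink \<Rightarrow> 'n mink"
  assumes A: "A \<in> O_plus" and \<rho>: "\<rho> < 1" "norm x \<le> \<rho>" and R: "R > 0"
    and nonzero: "cutoff R A x \<noteq> 0"
  shows "norm (klein_act A 0) \<le> sqrt (1 - ((1 - \<rho>) / R)^2)"
proof -
  define q where "q = A base_point"
  have q: "snd q > 0" "norm (fst q) ^ 2 = snd q ^ 2 - 1"
    using O_plus_base_point[OF A] unfolding q_def power2_norm_eq_inner
    by (auto simp: mink_inner_def power2_eq_square)
  have "norm (fst q) \<le> snd q"
    using q by (intro power2_le_imp_le[of "norm (fst q)"]) auto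
  then have "norm x * norm (fst q) \<le> \<rho> * snd q"
    using \<rho>(2) by (intro mult_mono) (auto intro: order_trans[OF norm_ge_zero])
  then have "x \<bullet> fst q \<le> \<rho> * snd q"
    using norm_cauchy_schwarz[of x "fst q"] by linarith
  moreover have "\<rho> * snd q \<le> snd q" using \<rho>(1) q(1) by simp
  ultimately have nonneg: "snd q - x \<bullet> fst q \<ge> 0" by linarith
  have "cosh_dist A x < R"
    using nonzero bump_eq_0[of "R - cosh_dist A x"] unfolding cutoff_def by fastforce
  moreover have "cosh_dist A x = (snd q - x \<bullet> fst q) / L x"
    unfolding cosh_dist_def q_def mink_inner_def by (simp add: minus_divide_left)
  moreover have "snd q - x \<bullet> fst q \<le> (snd q - x \<bullet> fst q) / L x"
    using L_pos[of x] L_le_1[of x] \<rho> nonneg by (simp add: le_divide_eq mult_left_le)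
  ultimately have "(1 - \<rho>) * snd q < R"
    using \<open>x \<bullet> fst q \<le> \<rho> * snd q\<close> by (simp add: algebra_simps)
  then have "(1 - \<rho>) / R \<le> 1 / snd q"
    using q(1) R by (simp add: field_simps)
  then have "((1 - \<rho>) / R)^2 \<le> (1 / snd q)^2"
    by (rule power_mono) (use \<rho>(1) R in simp)
  moreover have "klein_act A 0 = (1 / snd q) *\<^sub>R fst q"
    by (simp add: klein_act_def q_def base_point_def)
  then have "norm (klein_act A 0) ^ 2 = 1 - (1 / snd q)^2"
    using q by (simp add: power_mult_distrib power_divide field_simps)
  ultimately show ?thesis by (intro real_le_rsqrt) simp
qed

lemma continuous_at_klein_act:
  fixes A :: "'n::finite mink \<Rightarrow> 'n mink"
  assumes A: "A \<in> O_plus" and z: "norm z < 1"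
  shows "continuous (at z) (klein_act A)"
proof -
  have "continuous (at z) (\<lambda>x. A (x, 1::real))"
    using O_plusD(1)[OF A]
    by (intro bounded_linear.continuous[of A] continuous_intros) (simp add: linear_conv_bounded_linear)
  moreover have "snd (A (z, 1)) \<noteq> 0" using klein_factor_pos[OF A z] by (simp add: klein_factor_def)
  ultimately show ?thesis
    unfolding klein_act_def[abs_def] by (intro continuous_intros) auto
qed

text \<open>Convexity is transported by the action: with \<open>s = klein_factor (inv B)\<close>, the map
  \<open>x \<mapsto> s x *\<^sub>R klein_act (inv B) x\<close> is linear, so a convex combination of points is mapped to a
  convex combination with weights proportional to \<open>s\<close>.\<close>

lemma convex_on_fun_act:
  fixes B :: "'n::finite mink \<Rightarrow> 'n mink"
  assumes Bi: "inv B \<in> O_plus" and U: "convex U" "U \<subseteq> ball 0 1"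
    and UW: "\<And>x. x \<in> U \<Longrightarrow> klein_act (inv B) x \<in> W" and g: "convex_on W g"
  shows "convex_on U (fun_act B v g)"
  unfolding convex_on_def
proof (intro conjI U(1) ballI allI impI)
  let ?\<phi> = "klein_act (inv B)" and ?s = "klein_factor (inv B)"
  fix x1 x2 and u w :: real assume x12: "x1 \<in> U" "x2 \<in> U" and uw: "u \<ge> 0" "w \<ge> 0" "u + w = 1"
  define x where "x = u *\<^sub>R x1 + w *\<^sub>R x2"
  have x: "x \<in> U" unfolding x_def using convexD[OF U(1) x12 uw] .
  have inside: "norm y < 1" if "y \<in> U" for y using that U(2) by auto
  have s_pos: "?s y > 0" if "y \<in> U" for y using klein_factor_pos[OF Bi inside[OF that]] .
  have Pair_x: "(x, 1::real) = u *\<^sub>R (x1, 1) + w *\<^sub>R (x2, 1)" unfolding x_def using uw(3) by simp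
  have image: "inv B (x, 1) = u *\<^sub>R inv B (x1, 1) + w *\<^sub>R inv B (x2, 1)"
    using O_plusD(1)[OF Bi] by (simp only: Pair_x linear_add linear_scale)
  have s_x: "?s x = u * ?s x1 + w * ?s x2"
    using arg_cong[OF image, of snd] by (simp add: klein_factor_def)
  have scaled: "?s x *\<^sub>R ?\<phi> x = (u * ?s x1) *\<^sub>R ?\<phi> x1 + (w * ?s x2) *\<^sub>R ?\<phi> x2"
    using arg_cong[OF image, of fst] O_plus_apply_Pair_1[OF Bi] inside x x12 by simp
  have "?\<phi> x = (1 / ?s x) *\<^sub>R (?s x *\<^sub>R ?\<phi> x)" using s_pos[OF x] by simp
  also have "\<dots> = (u * ?s x1 / ?s x) *\<^sub>R ?\<phi> x1 + (w * ?s x2 / ?s x) *\<^sub>R ?\<phi> x2"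
    unfolding scaled by (simp add: scaleR_add_right)
  finally have \<phi>_x: "?\<phi> x = (u * ?s x1 / ?s x) *\<^sub>R ?\<phi> x1 + (w * ?s x2 / ?s x) *\<^sub>R ?\<phi> x2" .
  define l1 l2 where "l1 = u * ?s x1 / ?s x" and "l2 = w * ?s x2 / ?s x"
  have l: "l1 \<ge> 0" "l2 \<ge> 0" "l1 + l2 = 1"
    using s_pos[OF x12(1)] s_pos[OF x12(2)] s_pos[OF x] uw
    unfolding l1_def l2_def by (simp_all add: s_x add_divide_distrib[symmetric])
  have "g (?\<phi> x) \<le> l1 * g (?\<phi> x1) + l2 * g (?\<phi> x2)"
    using g UW x12 l unfolding convex_on_def \<phi>_x l1_def[symmetric] l2_def[symmetric] by blast
  then have "?s x * g (?\<phi> x) \<le> u * (?s x1 * g (?\<phi> x1)) + w * (?s x2 * g (?\<phi> x2))"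
    using s_pos[OF x] unfolding l1_def l2_def by (simp add: field_simps)
  moreover have "mink_inner (x, 1) v = u * mink_inner (x1, 1) v + w * mink_inner (x2, 1) v"
    unfolding Pair_x mink_inner_add_left mink_inner_scaleR_left ..
  ultimately show "fun_act B v g (u *\<^sub>R x1 + w *\<^sub>R x2) \<le> u * fun_act B v g x1 + w * fun_act B v g x2"
    using fun_act_eq_klein_factor[OF Bi] inside x x12 unfolding x_def[symmetric]
    by (simp add: algebra_simps)
qed

section \<open>An equivariant partition of unity\<close>

lemma smooth_on_unit_ball_if_smaller_balls:
  fixes f :: "real^'n::finite \<Rightarrow> real"
  assumes "\<And>\<rho> x. \<rho> < 1 \<Longrightarrow> x \<in> ball 0 \<rho> \<Longrightarrow> f x = g \<rho> x"
    and "\<And>\<rho>. \<rho> < 1 \<Longrightarrow> smooth_on (ball 0 \<rho>) (g \<rho>)"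
  shows "smooth_on (ball 0 1) f"
proof (rule smooth_on_locally[OF open_ball])
  fix x assume "x \<in> ball (0::real^'n) 1"
  then have "x \<in> ball 0 ((norm x + 1) / 2)" "(norm x + 1) / 2 < 1" by auto
  then show "\<exists>T g. open T \<and> x \<in> T \<and> smooth_on T g \<and> (\<forall>y\<in>T. f y = g y)"
    using assms by blast
qed

definition mink_coord :: "'n::finite mink \<Rightarrow> 'n option \<Rightarrow> real" where
  "mink_coord v k = (case k of Some i \<Rightarrow> fst v $ i | None \<Rightarrow> - snd v)"

definition affine_coord :: "real^'n::finite \<Rightarrow> 'n option \<Rightarrow> real" where
  "affine_coord x k = (case k of Some i \<Rightarrow> x $ i | None \<Rightarrow> 1)"

lemma mink_inner_Pair_1_eq_sum: "mink_inner (x, 1) v = (\<Sum>k\<in>UNIV. mink_coord v k * affine_coord x k)"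
proof -
  have "(\<Sum>k\<in>UNIV. mink_coord v k * affine_coord x k)
      = mink_coord v None * affine_coord x None + (\<Sum>i\<in>UNIV. mink_coord v (Some i) * affine_coord x (Some i))"
    by (simp add: UNIV_option_conv sum.reindex)
  then show ?thesis
    by (simp add: mink_inner_def mink_coord_def affine_coord_def inner_vec_def mult.commute)
qed

lemma smooth_on_affine_coord: "open S \<Longrightarrow> smooth_on S (\<lambda>x::real^'n::finite. affine_coord x k)"
  by (cases k) (simp_all add: affine_coord_def smooth_on_component smooth_on_const)

lemma tendsto_mink_coord:
  "(f \<longlongrightarrow> v) F \<Longrightarrow> ((\<lambda>n. mink_coord (f n) k) \<longlongrightarrow> mink_coord v k) F"
  by (cases k) (auto simp: mink_coord_def intro!: tendsto_vec_nth tendsto_fst tendsto_snd tendsto_minus)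

locale discrete_klein_group =
  fixes \<Gamma> :: "('n::finite mink \<Rightarrow> 'n mink) set"
  assumes subgroup: "is_subgroup_O \<Gamma>"
    and proper: "acts_properly_discontinuously \<Gamma>"
begin

lemma in_O_plus: "A \<in> \<Gamma> \<Longrightarrow> A \<in> O_plus"
  and inv_in: "A \<in> \<Gamma> \<Longrightarrow> inv A \<in> \<Gamma>"
  and comp_in: "A \<in> \<Gamma> \<Longrightarrow> B \<in> \<Gamma> \<Longrightarrow> A \<circ> B \<in> \<Gamma>"
  using subgroup unfolding is_subgroup_O_def by auto

lemma inv_in_O_plus: "A \<in> \<Gamma> \<Longrightarrow> inv A \<in> O_plus"
  using in_O_plus inv_in by blast

lemma finite_cutoffs_meeting_cball:
  assumes \<rho>: "\<rho> < 1" and R: "R > 0"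
  shows "finite {A\<in>\<Gamma>. \<exists>x\<in>cball 0 \<rho>. cutoff R A x \<noteq> 0}"
proof -
  define \<rho>' where "\<rho>' = sqrt (1 - ((1 - \<rho>) / R)^2)"
  have "\<rho>' < 1" unfolding \<rho>'_def using \<rho> R by simp
  then have K: "compact (cball (0::real^'n) \<rho>')" "cball (0::real^'n) \<rho>' \<subseteq> ball 0 1" by auto
  have "{A\<in>\<Gamma>. \<exists>x\<in>cball 0 \<rho>. cutoff R A x \<noteq> 0} \<subseteq> {A\<in>\<Gamma>. klein_act A ` cball 0 \<rho>' \<inter> cball 0 \<rho>' \<noteq> {}}"
  proof safe
    fix A x assume "A \<in> \<Gamma>" "x \<in> cball (0::real^'n) \<rho>" "cutoff R A x \<noteq> 0"
      and disjoint: "klein_act A ` cball 0 \<rho>' \<inter> cball 0 \<rho>' = {}"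
    then have le: "norm (klein_act A 0) \<le> \<rho>'"
      unfolding \<rho>'_def using norm_klein_act_0_le_if_cutoff[OF in_O_plus \<rho>] R by auto
    moreover have "0 \<le> \<rho>'" using le norm_ge_zero[of "klein_act A 0"] by linarith
    ultimately have "klein_act A 0 \<in> klein_act A ` cball 0 \<rho>' \<inter> cball 0 \<rho>'"
      by auto
    then show False using disjoint by blast
  qed
  then show ?thesis
    using proper K unfolding acts_properly_discontinuously_def by (blast intro: finite_subset)
qed

end

locale cocompact_klein_group = discrete_klein_group \<Gamma>
  for \<Gamma> :: "('n::finite mink \<Rightarrow> 'n mink) set" +
  fixes r :: real
  assumes r: "0 \<le> r" "r < 1"
    and fundamental: "\<And>x. norm x < 1 \<Longrightarrow> \<exists>A\<in>\<Gamma>. norm (klein_act (inv A) x) \<le> r"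
begin

text \<open>The radius exceeds \<open>1 / L x\<close> for \<open>norm x \<le> r\<close>, so every point lies in the support of the
  cutoff of the element moving it into \<open>cball 0 r\<close>.\<close>

definition radius :: real where
  "radius = 1 / sqrt (1 - r^2) + 1"

definition active :: "real^'n \<Rightarrow> ('n mink \<Rightarrow> 'n mink) set" where
  "active x = {A\<in>\<Gamma>. cutoff radius A x \<noteq> 0}"

definition active_near :: "real \<Rightarrow> ('n mink \<Rightarrow> 'n mink) set" where
  "active_near \<rho> = {A\<in>\<Gamma>. \<exists>x\<in>cball 0 \<rho>. cutoff radius A x \<noteq> 0}"

definition cutoff_sum :: "real^'n \<Rightarrow> real" where
  "cutoff_sum x = (\<Sum>A\<in>active x. cutoff radius A x)"

definition affine_average :: "(('n mink \<Rightarrow> 'n mink) \<Rightarrow> 'n mink) \<Rightarrow> real^'n \<Rightarrow> real" where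
  "affine_average \<sigma> x = (\<Sum>A\<in>active x. cutoff radius A x * mink_inner (x, 1) (\<sigma> A)) / cutoff_sum x"

lemma radius_pos: "radius > 0"
  using r by (simp add: radius_def abs_square_less_1 add_pos_pos)

lemma finite_active_near: "\<rho> < 1 \<Longrightarrow> finite (active_near \<rho>)"
  unfolding active_near_def using finite_cutoffs_meeting_cball radius_pos by blast

lemma sum_active_eq_sum_active_near:
  assumes "\<rho> < 1" "norm x \<le> \<rho>"
  shows "(\<Sum>A\<in>active x. cutoff radius A x * g A) = (\<Sum>A\<in>active_near \<rho>. cutoff radius A x * g A)"
  by (rule sum.mono_neutral_left[OF finite_active_near[OF assms(1)]])
     (use assms(2) in \<open>auto simp: active_def active_near_def\<close>)

lemma finite_active: "norm x < 1 \<Longrightarrow> finite (active x)"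
  by (rule finite_subset[OF _ finite_active_near[of "norm x"]]) (auto simp: active_def active_near_def)

lemma sum_active_klein_act_inv:
  assumes B: "B \<in> \<Gamma>" and x: "norm x < 1"
  shows "(\<Sum>A\<in>active (klein_act (inv B) x). g (B \<circ> A)) = (\<Sum>C\<in>active x. g C)"
proof (rule sum.reindex_bij_witness[where i="\<lambda>C. inv B \<circ> C" and j="\<lambda>A. B \<circ> A"])
  have cancel: "inv B \<circ> B = id" "B \<circ> inv B = id" using O_plus_inv(2,3)[OF in_O_plus[OF B]] by auto
  note cutoff_B = cutoff_klein_act_inv[OF in_O_plus[OF B] inv_in_O_plus[OF B] x]
  fix A assume "A \<in> active (klein_act (inv B) x)"
  then show "inv B \<circ> (B \<circ> A) = A" "B \<circ> A \<in> active x"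
    using cancel comp_in[OF B] cutoff_B by (auto simp: active_def o_assoc)
next
  have cancel: "inv B \<circ> B = id" "B \<circ> inv B = id" using O_plus_inv(2,3)[OF in_O_plus[OF B]] by auto
  note cutoff_B = cutoff_klein_act_inv[OF in_O_plus[OF B] inv_in_O_plus[OF B] x]
  fix C assume "C \<in> active x"
  then show "B \<circ> (inv B \<circ> C) = C" "inv B \<circ> C \<in> active (klein_act (inv B) x)"
    using cancel comp_in[OF inv_in[OF B]] cutoff_B[of _ "inv B \<circ> C"] by (auto simp: active_def o_assoc)
qed simp

lemma cutoff_sum_pos:
  assumes x: "norm x < 1"
  shows "cutoff_sum x > 0"
proof -
  obtain A where A: "A \<in> \<Gamma>" "norm (klein_act (inv A) x) \<le> r" using fundamental[OF x] by blast
  define y where "y = klein_act (inv A) x"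
  have "cosh_dist A x = cosh_dist id y"
    unfolding y_def using cosh_dist_klein_act_inv[OF in_O_plus[OF A(1)] inv_in_O_plus[OF A(1)] x, of id] by simp
  also have "\<dots> = 1 / L y" by (simp add: cosh_dist_def base_point_def mink_inner_def)
  also have "\<dots> \<le> 1 / sqrt (1 - r^2)"
  proof -
    have "norm y ^ 2 \<le> r ^ 2" using A(2) unfolding y_def by (simp add: power_mono)
    then show ?thesis using r by (simp add: L_def frac_le abs_square_less_1)
  qed
  finally have "cutoff radius A x > 0"
    unfolding cutoff_def by (intro bump_pos) (simp add: radius_def)
  moreover from this have "cutoff radius A x \<le> cutoff_sum x"
    unfolding cutoff_sum_def using A(1) finite_active[OF x]
    by (intro member_le_sum) (auto simp: active_def cutoff_nonneg)
  ultimately show ?thesis by simp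
qed

text \<open>Equivariance of the average: the cocycle identity turns the affine functions of the
  translated orbit into those of the original one, up to the affine term of \<open>\<sigma> B\<close>.\<close>

lemma affine_average_fun_act:
  assumes \<sigma>: "cocycle \<Gamma> \<sigma>" and B: "B \<in> \<Gamma>" and x: "norm x < 1"
  shows "fun_act B (\<sigma> B) (affine_average \<sigma>) x = affine_average \<sigma> x"
proof -
  define y where "y = klein_act (inv B) x"
  define s where "s = klein_factor (inv B) x"
  have s: "s > 0" unfolding s_def using klein_factor_pos[OF inv_in_O_plus[OF B] x] .
  note cutoff_B = cutoff_klein_act_inv[OF in_O_plus[OF B] inv_in_O_plus[OF B] x]
  have sum_y: "cutoff_sum y = cutoff_sum x"
    unfolding cutoff_sum_def y_def cutoff_B
    using sum_active_klein_act_inv[OF B x, of "\<lambda>C. cutoff radius C x"] by simp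
  have "(\<Sum>A\<in>active y. cutoff radius A y * mink_inner (y, 1) (\<sigma> A))
      = (\<Sum>A\<in>active y. cutoff radius (B \<circ> A) x *
           ((mink_inner (x, 1) (\<sigma> (B \<circ> A)) - mink_inner (x, 1) (\<sigma> B)) / s))"
  proof (rule sum.cong[OF refl])
    fix A assume "A \<in> active y"
    then have "\<sigma> (B \<circ> A) = \<sigma> B + B (\<sigma> A)" using \<sigma> B unfolding cocycle_def active_def by blast
    then show "cutoff radius A y * mink_inner (y, 1) (\<sigma> A)
        = cutoff radius (B \<circ> A) x * ((mink_inner (x, 1) (\<sigma> (B \<circ> A)) - mink_inner (x, 1) (\<sigma> B)) / s)"
      unfolding y_def s_def cutoff_B mink_inner_klein_act_inv[OF in_O_plus[OF B] inv_in_O_plus[OF B] x]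
      by (simp add: mink_inner_add_right)
  qed
  also have "\<dots> = (\<Sum>C\<in>active x. cutoff radius C x * ((mink_inner (x, 1) (\<sigma> C) - mink_inner (x, 1) (\<sigma> B)) / s))"
    unfolding y_def by (rule sum_active_klein_act_inv[OF B x])
  also have "\<dots> = ((\<Sum>C\<in>active x. cutoff radius C x * mink_inner (x, 1) (\<sigma> C))
      - mink_inner (x, 1) (\<sigma> B) * cutoff_sum x) / s"
    unfolding cutoff_sum_def
    by (simp add: diff_divide_distrib sum_divide_distrib sum_subtractf[symmetric] sum_distrib_left
        right_diff_distrib mult.commute)
  finally have "s * affine_average \<sigma> y = affine_average \<sigma> x - mink_inner (x, 1) (\<sigma> B)"
    unfolding affine_average_def sum_y using s cutoff_sum_pos[OF x] by (simp add: field_simps)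
  then show ?thesis
    unfolding y_def s_def fun_act_eq_klein_factor[OF inv_in_O_plus[OF B] x] by simp
qed

definition average_basis :: "('n mink \<Rightarrow> 'n mink) \<times> 'n option \<Rightarrow> real^'n \<Rightarrow> real" where
  "average_basis p x = affine_coord x (snd p) * cutoff radius (fst p) x / cutoff_sum x"

lemma affine_average_eq_sum_basis:
  assumes \<rho>: "\<rho> < 1" "norm x \<le> \<rho>"
  shows "affine_average \<sigma> x
    = (\<Sum>p\<in>active_near \<rho> \<times> UNIV. mink_coord (\<sigma> (fst p)) (snd p) * average_basis p x)"
proof -
  have "affine_average \<sigma> x
      = (\<Sum>A\<in>active_near \<rho>. \<Sum>k\<in>UNIV. mink_coord (\<sigma> A) k * average_basis (A, k) x)"
    unfolding affine_average_def sum_active_eq_sum_active_near[OF \<rho>] mink_inner_Pair_1_eq_sum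
      average_basis_def
    by (simp add: sum_divide_distrib sum_distrib_left mult_ac)
  then show ?thesis by (simp add: sum.cartesian_product case_prod_unfold)
qed

lemma smooth_on_cutoff_sum: "smooth_on (ball 0 1) cutoff_sum"
proof (rule smooth_on_unit_ball_if_smaller_balls[where g="\<lambda>\<rho> x. \<Sum>A\<in>active_near \<rho>. cutoff radius A x"])
  show "cutoff_sum x = (\<Sum>A\<in>active_near \<rho>. cutoff radius A x)" if "\<rho> < 1" "x \<in> ball 0 \<rho>" for \<rho> x
    using sum_active_eq_sum_active_near[of \<rho> x "\<lambda>_. 1"] that by (simp add: cutoff_sum_def)
  show "smooth_on (ball 0 \<rho>) (\<lambda>x. \<Sum>A\<in>active_near \<rho>. cutoff radius A x)" if "\<rho> < 1" for \<rho>
    using that by (intro smooth_on_sum finite_active_near smooth_on_subset[OF smooth_on_cutoff]) auto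
qed

lemma smooth_on_average_basis: "smooth_on (ball 0 1) (average_basis p)"
proof -
  have "smooth_on (ball 0 1) (\<lambda>x. affine_coord x (snd p) * cutoff radius (fst p) x * (1 / cutoff_sum x))"
    by (intro smooth_on_mult smooth_on_affine_coord smooth_on_cutoff smooth_on_inverse smooth_on_cutoff_sum
        open_ball) (simp add: cutoff_sum_pos)
  then show ?thesis by (simp add: average_basis_def[abs_def])
qed

lemma iter_partial_affine_average:
  assumes "\<rho> < 1" "x \<in> ball 0 \<rho>"
  shows "iter_partial is (affine_average \<sigma>) x
    = (\<Sum>p\<in>active_near \<rho> \<times> UNIV. mink_coord (\<sigma> (fst p)) (snd p) * iter_partial is (average_basis p) x)"
proof -
  have finite: "finite (active_near \<rho> \<times> (UNIV :: 'n option set))"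
    using finite_active_near[OF assms(1)] by simp
  have smooth: "smooth_on (ball 0 \<rho>) (average_basis p)" for p
    using assms(1) by (intro smooth_on_subset[OF smooth_on_average_basis] subset_ball) simp
  have "iter_partial is (affine_average \<sigma>) x = iter_partial is
      (\<lambda>x. \<Sum>p\<in>active_near \<rho> \<times> UNIV. mink_coord (\<sigma> (fst p)) (snd p) * average_basis p x) x"
    using affine_average_eq_sum_basis[OF assms(1)] assms smooth finite
    by (intro iter_partial_cong_open[OF open_ball] smooth_on_sum smooth_on_cmult open_ball) auto
  also have "\<dots> = (\<Sum>p\<in>active_near \<rho> \<times> UNIV. mink_coord (\<sigma> (fst p)) (snd p) * iter_partial is (average_basis p) x)"
    by (rule iter_partial_sum_cmult[OF open_ball finite smooth assms(2)])
  finally show ?thesis .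
qed

lemma smooth_on_affine_average: "smooth_on (ball 0 1) (affine_average \<sigma>)"
proof (rule smooth_on_unit_ball_if_smaller_balls)
  show "affine_average \<sigma> x
      = (\<Sum>p\<in>active_near \<rho> \<times> UNIV. mink_coord (\<sigma> (fst p)) (snd p) * average_basis p x)"
    if "\<rho> < 1" "x \<in> ball 0 \<rho>" for \<rho> x
    using affine_average_eq_sum_basis that by simp
  show "smooth_on (ball 0 \<rho>)
      (\<lambda>x. \<Sum>p\<in>active_near \<rho> \<times> UNIV. mink_coord (\<sigma> (fst p)) (snd p) * average_basis p x)"
    if "\<rho> < 1" for \<rho>
    using that finite_active_near[OF that]
    by (intro smooth_on_sum smooth_on_cmult smooth_on_subset[OF smooth_on_average_basis]) auto
qed

text \<open>\<open>ball 0 mid_radius\<close> is a neighbourhood of \<open>cball 0 r\<close>, which meets every orbit; the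
  convexity constant makes the construction convex there, and equivariance spreads convexity
  everywhere.\<close>

definition mid_radius :: real where
  "mid_radius = (1 + r) / 2"

lemma mid_radius: "r < mid_radius" "mid_radius < 1"
  using r by (auto simp: mid_radius_def)

definition basis_hessian_bound :: "('n mink \<Rightarrow> 'n mink) \<times> 'n option \<Rightarrow> real" where
  "basis_hessian_bound p =
     (SUP z\<in>cball 0 mid_radius. \<Sum>i\<in>UNIV. \<Sum>j\<in>UNIV. \<bar>iter_partial [j, i] (average_basis p) z\<bar>)"

lemma abs_iter_partial_average_basis_le:
  assumes z: "z \<in> cball 0 mid_radius"
  shows "\<bar>iter_partial [j, i] (average_basis p) z\<bar> \<le> basis_hessian_bound p"
proof -
  let ?H = "\<lambda>z. \<Sum>i\<in>UNIV. \<Sum>j\<in>UNIV. \<bar>iter_partial [j, i] (average_basis p) z\<bar>"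
  have sub: "cball (0::real^'n) mid_radius \<subseteq> ball 0 1" using mid_radius by auto
  have "continuous_on (ball 0 1) (iter_partial [j, i] (average_basis p))" for i j
    using smooth_on_average_basis unfolding smooth_on_def by (blast intro: differentiable_imp_continuous_on)
  then have "continuous_on (cball 0 mid_radius) ?H"
    by (intro continuous_intros continuous_on_subset[OF _ sub])
  then have "bdd_above (?H ` cball 0 mid_radius)"
    by (intro bounded_imp_bdd_above compact_imp_bounded compact_continuous_image compact_cball)
  then have "?H z \<le> basis_hessian_bound p"
    unfolding basis_hessian_bound_def using z by (rule cSUP_upper2) simp
  moreover have "\<bar>iter_partial [j, i] (average_basis p) z\<bar> \<le> ?H z"
    by (intro order_trans[OF _ member_le_sum[of i]] member_le_sum) (auto intro: sum_nonneg)
  ultimately show ?thesis by linarith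
qed

definition convexity_const :: "(('n mink \<Rightarrow> 'n mink) \<Rightarrow> 'n mink) \<Rightarrow> real" where
  "convexity_const \<sigma> = real CARD('n)^2 *
     (\<Sum>p\<in>active_near mid_radius \<times> UNIV. \<bar>mink_coord (\<sigma> (fst p)) (snd p)\<bar> * basis_hessian_bound p)"

definition convex_equivariant :: "(('n mink \<Rightarrow> 'n mink) \<Rightarrow> 'n mink) \<Rightarrow> real^'n \<Rightarrow> real" where
  "convex_equivariant \<sigma> x = affine_average \<sigma> x - convexity_const \<sigma> * L x"

lemma smooth_on_convex_equivariant: "smooth_on (ball 0 1) (convex_equivariant \<sigma>)"
  unfolding convex_equivariant_def[abs_def]
  by (intro smooth_on_diff smooth_on_cmult smooth_on_affine_average smooth_on_L open_ball)

lemma convex_on_ball_mid_radius: "convex_on (ball 0 mid_radius) (convex_equivariant \<sigma>)"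
  unfolding convex_equivariant_def[abs_def]
proof (rule convex_on_diff_cmult_L[OF open_ball _ convex_ball _ smooth_on_affine_average])
  let ?M = "\<Sum>p\<in>active_near mid_radius \<times> UNIV. \<bar>mink_coord (\<sigma> (fst p)) (snd p)\<bar> * basis_hessian_bound p"
  show "ball 0 mid_radius \<subseteq> ball (0::real^'n) 1" "ball 0 mid_radius \<subseteq> ball (0::real^'n) 1"
    using mid_radius by auto
  show "convexity_const \<sigma> \<ge> real CARD('n)^2 * ?M" by (simp add: convexity_const_def)
  fix z i j assume z: "z \<in> ball (0::real^'n) mid_radius"
  have "\<bar>iter_partial [j, i] (affine_average \<sigma>) z\<bar>
      = \<bar>\<Sum>p\<in>active_near mid_radius \<times> UNIV.
          mink_coord (\<sigma> (fst p)) (snd p) * iter_partial [j, i] (average_basis p) z\<bar>"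
    unfolding iter_partial_affine_average[OF mid_radius(2) z] ..
  also have "\<dots> \<le> ?M"
    using z abs_iter_partial_average_basis_le
    by (intro order_trans[OF sum_abs sum_mono]) (simp add: abs_mult mult_left_mono)
  finally show "\<bar>iter_partial [j, i] (affine_average \<sigma>) z\<bar> \<le> ?M" .
qed

lemma fun_act_convex_equivariant:
  assumes \<sigma>: "cocycle \<Gamma> \<sigma>" and B: "B \<in> \<Gamma>" and x: "norm x < 1"
  shows "fun_act B (\<sigma> B) (convex_equivariant \<sigma>) x = convex_equivariant \<sigma> x"
proof -
  have "fun_act B 0 L x = L x"
    using fun_act_eq_klein_factor[OF inv_in_O_plus[OF B] x] L_klein_act[OF inv_in_O_plus[OF B] x]
      klein_factor_pos[OF inv_in_O_plus[OF B] x]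
    by (simp add: mink_inner_def)
  then show ?thesis
    using affine_average_fun_act[OF assms]
    unfolding convex_equivariant_def fun_act_def by (simp add: algebra_simps)
qed

lemma equivariant_convex_equivariant:
  "cocycle \<Gamma> \<sigma> \<Longrightarrow> equivariant \<Gamma> \<sigma> (convex_equivariant \<sigma>)"
  using smooth_on_convex_equivariant[of \<sigma>] fun_act_convex_equivariant
  unfolding equivariant_def smooth_on_def
  by (metis differentiable_imp_continuous_on iter_partial.simps(1) mem_ball_0)

lemma convex_on_convex_equivariant:
  assumes \<sigma>: "cocycle \<Gamma> \<sigma>"
  shows "convex_on (ball 0 1) (convex_equivariant \<sigma>)"
proof (rule convex_on_if_locally_convex[OF open_ball convex_ball smooth_on_convex_equivariant])
  fix z :: "real^'n" assume "z \<in> ball 0 1"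
  then have z: "norm z < 1" by simp
  obtain B where B: "B \<in> \<Gamma>" "norm (klein_act (inv B) z) \<le> r" using fundamental[OF z] by blast
  obtain \<delta> where \<delta>: "\<delta> > 0" "\<And>x. dist x z < \<delta> \<Longrightarrow> dist (klein_act (inv B) x) (klein_act (inv B) z) < mid_radius - r"
    using continuous_at_klein_act[OF inv_in_O_plus[OF B(1)] z] mid_radius
    unfolding continuous_at_eps_delta by (meson diff_gt_0_iff_gt)
  define \<delta>' where "\<delta>' = min \<delta> (1 - norm z)"
  have ball: "ball z \<delta>' \<subseteq> ball 0 1"
  proof
    fix x assume "x \<in> ball z \<delta>'"
    then have "norm (x - z) < 1 - norm z" by (simp add: \<delta>'_def dist_norm norm_minus_commute)
    then show "x \<in> ball 0 1" using norm_triangle_sub[of x z] by simp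
  qed
  have "convex_on (ball z \<delta>') (fun_act B (\<sigma> B) (convex_equivariant \<sigma>))"
  proof (rule convex_on_fun_act[OF inv_in_O_plus[OF B(1)] convex_ball ball _ convex_on_ball_mid_radius])
    fix x assume "x \<in> ball z \<delta>'"
    then have "dist (klein_act (inv B) x) (klein_act (inv B) z) < mid_radius - r"
      using \<delta>(2) by (simp add: \<delta>'_def dist_commute)
    then show "klein_act (inv B) x \<in> ball 0 mid_radius"
      using B(2) norm_triangle_sub[of "klein_act (inv B) x" "klein_act (inv B) z"]
      by (simp add: dist_norm)
  qed
  moreover have "fun_act B (\<sigma> B) (convex_equivariant \<sigma>) x = convex_equivariant \<sigma> x"
    if "x \<in> ball z \<delta>'" for x
    using fun_act_convex_equivariant[OF \<sigma> B(1)] ball that by auto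
  ultimately have "convex_on (ball z \<delta>') (convex_equivariant \<sigma>)"
    using convex_on_cong by blast
  moreover have "\<delta>' > 0" using \<delta>(1) z by (simp add: \<delta>'_def)
  ultimately show "\<exists>\<delta>>0. convex_on (ball z \<delta>) (convex_equivariant \<sigma>)" by blast
qed

lemma convexity_const_tendsto:
  assumes "\<forall>A\<in>\<Gamma>. (\<lambda>n. \<tau>s n A) \<longlonglongrightarrow> \<tau> A"
  shows "(\<lambda>n. convexity_const (\<tau>s n)) \<longlonglongrightarrow> convexity_const \<tau>"
  using assms unfolding convexity_const_def
  by (intro tendsto_mult tendsto_const tendsto_sum tendsto_rabs tendsto_mink_coord)
     (auto simp: active_near_def)

lemma iter_partial_convex_equivariant_tendsto:
  assumes conv: "\<forall>A\<in>\<Gamma>. (\<lambda>n. \<tau>s n A) \<longlonglongrightarrow> \<tau> A" and x: "x \<in> ball 0 1"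
  shows "(\<lambda>n. iter_partial is (convex_equivariant (\<tau>s n)) x) \<longlonglongrightarrow> iter_partial is (convex_equivariant \<tau>) x"
proof -
  define \<rho> where "\<rho> = (norm x + 1) / 2"
  have \<rho>: "\<rho> < 1" "x \<in> ball 0 \<rho>" using x unfolding \<rho>_def by auto
  have "iter_partial is (convex_equivariant \<sigma>) x
      = (\<Sum>p\<in>active_near \<rho> \<times> UNIV. mink_coord (\<sigma> (fst p)) (snd p) * iter_partial is (average_basis p) x)
        - convexity_const \<sigma> * iter_partial is L x" for \<sigma>
    unfolding convex_equivariant_def
      iter_partial_diff_cmult[OF open_ball smooth_on_affine_average smooth_on_L x]
      iter_partial_affine_average[OF \<rho>] ..
  moreover have "A \<in> \<Gamma>" if "A \<in> active_near \<rho>" for A using that by (simp add: active_near_def)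
  ultimately show ?thesis
    using conv
    by (simp only:) (intro tendsto_diff tendsto_sum tendsto_mult tendsto_const tendsto_mink_coord
        convexity_const_tendsto; auto)
qed

end

definition smooth_equivariant_approximation ::
  "('n::finite mink \<Rightarrow> 'n mink) set \<Rightarrow> ((real^'n \<Rightarrow> real) \<Rightarrow> bool)
     \<Rightarrow> (('n mink \<Rightarrow> 'n mink) \<Rightarrow> 'n mink) \<Rightarrow> (nat \<Rightarrow> ('n mink \<Rightarrow> 'n mink) \<Rightarrow> 'n mink) \<Rightarrow> bool"
where
  "smooth_equivariant_approximation \<Gamma> P \<tau> \<tau>s \<longleftrightarrow>
     (\<exists>h hs. smooth_on (ball 0 1) h \<and> P h \<and> equivariant \<Gamma> \<tau> h \<and>
        (\<forall>n. smooth_on (ball 0 1) (hs n) \<and> P (hs n) \<and> equivariant \<Gamma> (\<tau>s n) (hs n)) \<and>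
        (\<forall>x\<in>ball 0 1. (\<lambda>n. hs n x) \<longlonglongrightarrow> h x) \<and>
        (\<forall>i j. \<forall>x\<in>ball 0 1. (\<lambda>n. iter_partial [i, j] (hs n) x) \<longlonglongrightarrow> iter_partial [i, j] h x))"

lemma (in cocompact_klein_group) convex_smooth_equivariant_approximation:
  assumes "cocycle \<Gamma> \<tau>" "\<And>n. cocycle \<Gamma> (\<tau>s n)" "\<forall>A\<in>\<Gamma>. (\<lambda>n. \<tau>s n A) \<longlonglongrightarrow> \<tau> A"
  shows "smooth_equivariant_approximation \<Gamma> (convex_on (ball 0 1)) \<tau> \<tau>s"
  unfolding smooth_equivariant_approximation_def
  using assms iter_partial_convex_equivariant_tendsto[OF assms(3), of _ "[]"]
    iter_partial_convex_equivariant_tendsto[OF assms(3)]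
  by (intro exI[of _ "convex_equivariant \<tau>"] exI[of _ "\<lambda>n. convex_equivariant (\<tau>s n)"])
     (simp del: iter_partial.simps(2)
        add: smooth_on_convex_equivariant convex_on_convex_equivariant equivariant_convex_equivariant)

lemma cocycle_uminus: "is_subgroup_O \<Gamma> \<Longrightarrow> cocycle \<Gamma> \<tau> \<Longrightarrow> cocycle \<Gamma> (\<lambda>A. - \<tau> A)"
  unfolding cocycle_def is_subgroup_O_def by (auto simp: O_plus_def linear_neg)

lemma equivariant_uminus: "equivariant \<Gamma> (\<lambda>A. - \<tau> A) g \<Longrightarrow> equivariant \<Gamma> \<tau> (\<lambda>x. - g x)"
  unfolding equivariant_def by (auto simp: fun_act_def continuous_on_minus algebra_simps)

lemma concave_smooth_equivariant_approximation_uminus: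
  assumes "smooth_equivariant_approximation \<Gamma> (convex_on (ball 0 1)) (\<lambda>A. - \<tau> A) (\<lambda>n A. - \<tau>s n A)"
  shows "smooth_equivariant_approximation \<Gamma> (concave_on (ball 0 1)) \<tau> \<tau>s"
proof -
  obtain h hs where h: "smooth_on (ball 0 1) h" "convex_on (ball 0 1) h" "equivariant \<Gamma> (\<lambda>A. - \<tau> A) h"
    and hs: "\<And>n. smooth_on (ball 0 1) (hs n)" "\<And>n. convex_on (ball 0 1) (hs n)"
      "\<And>n. equivariant \<Gamma> (\<lambda>A. - \<tau>s n A) (hs n)"
    and lim: "\<forall>x\<in>ball 0 1. (\<lambda>n. hs n x) \<longlonglongrightarrow> h x"
      "\<forall>i j. \<forall>x\<in>ball 0 1. (\<lambda>n. iter_partial [i, j] (hs n) x) \<longlonglongrightarrow> iter_partial [i, j] h x"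
    using assms unfolding smooth_equivariant_approximation_def by blast
  show ?thesis
    unfolding smooth_equivariant_approximation_def concave_on_def
    using h hs lim
    by (intro exI[of _ "\<lambda>x. - h x"] exI[of _ "\<lambda>n x. - hs n x"])
       (simp del: iter_partial.simps(2) add: smooth_on_minus equivariant_uminus tendsto_minus
        iter_partial_minus[OF open_ball h(1)] iter_partial_minus[OF open_ball hs(1)])
qed

lemma cocompact_fundamental_radius:
  fixes \<Gamma> :: "('n::finite mink \<Rightarrow> 'n mink) set"
  assumes "is_subgroup_O \<Gamma>" "acts_cocompactly \<Gamma>"
  obtains r where "0 \<le> r" "r < 1" "\<And>x. norm x < 1 \<Longrightarrow> \<exists>A\<in>\<Gamma>. norm (klein_act (inv A) x) \<le> r"
proof -
  obtain K where K: "compact K" "K \<subseteq> ball 0 1" "(\<Union>A\<in>\<Gamma>. klein_act A ` K) = ball 0 1"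
    using assms(2) unfolding acts_cocompactly_def by blast
  obtain r where r: "0 \<le> r" "r < 1" "\<And>k. k \<in> K \<Longrightarrow> norm k \<le> r"
  proof (cases "K = {}")
    case False
    obtain k0 where "k0 \<in> K" "\<And>k. k \<in> K \<Longrightarrow> norm k \<le> norm k0"
      using compact_attains_sup[OF compact_continuous_image[OF continuous_on_norm_id K(1)]] False by auto
    then show thesis using that[of "norm k0"] K(2) by auto
  qed (use that[of 0] in simp)
  have "\<exists>A\<in>\<Gamma>. norm (klein_act (inv A) x) \<le> r" if x: "norm x < 1" for x
  proof -
    have "x \<in> (\<Union>A\<in>\<Gamma>. klein_act A ` K)" using K(3) x by simp
    then obtain A k where A: "A \<in> \<Gamma>" "k \<in> K" "x = klein_act A k" by blast
    have "A \<in> O_plus" "inv A \<in> O_plus" using assms(1) A(1) unfolding is_subgroup_O_def by auto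
    moreover have "norm k < 1" using A(2) K(2) by auto
    ultimately have "klein_act (inv A) x = k" using klein_act_inv_cancel A(3) by simp
    then show ?thesis using A(1,2) r(3) by auto
  qed
  then show thesis using that r(1,2) by blast
qed

theorem proposition3p11:
  fixes \<Gamma> :: "((real^'n::finite) \<times> real \<Rightarrow> (real^'n) \<times> real) set"
  assumes "CARD('n) \<ge> 2"
    and "is_subgroup_O \<Gamma>"
    and "acts_freely \<Gamma>"
    and "acts_properly_discontinuously \<Gamma>"
    and "acts_cocompactly \<Gamma>"
  shows
    "(\<forall>\<tau>. cocycle \<Gamma> \<tau> \<longrightarrow>
        (\<exists>h. smooth_on (ball 0 1) h \<and> convex_on (ball 0 1) h \<and> equivariant \<Gamma> \<tau> h)) \<and>
     (\<forall>\<tau>. cocycle \<Gamma> \<tau> \<longrightarrow>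
        (\<exists>h. smooth_on (ball 0 1) h \<and> concave_on (ball 0 1) h \<and> equivariant \<Gamma> \<tau> h)) \<and>
     (\<forall>\<tau> \<tau>s. cocycle \<Gamma> \<tau> \<and> (\<forall>n::nat. cocycle \<Gamma> (\<tau>s n)) \<and>
          (\<forall>A\<in>\<Gamma>. (\<lambda>n. \<tau>s n A) \<longlonglongrightarrow> \<tau> A) \<longrightarrow>
        (\<exists>h hs. smooth_on (ball 0 1) h \<and> convex_on (ball 0 1) h \<and> equivariant \<Gamma> \<tau> h \<and>
           (\<forall>n. smooth_on (ball 0 1) (hs n) \<and> convex_on (ball 0 1) (hs n) \<and>
                equivariant \<Gamma> (\<tau>s n) (hs n)) \<and>
           (\<forall>x\<in>ball 0 1. (\<lambda>n. hs n x) \<longlonglongrightarrow> h x) \<and>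
           (\<forall>i j. \<forall>x\<in>ball 0 1. (\<lambda>n. iter_partial [i, j] (hs n) x) \<longlonglongrightarrow> iter_partial [i, j] h x))) \<and>
     (\<forall>\<tau> \<tau>s. cocycle \<Gamma> \<tau> \<and> (\<forall>n::nat. cocycle \<Gamma> (\<tau>s n)) \<and>
          (\<forall>A\<in>\<Gamma>. (\<lambda>n. \<tau>s n A) \<longlonglongrightarrow> \<tau> A) \<longrightarrow>
        (\<exists>h hs. smooth_on (ball 0 1) h \<and> concave_on (ball 0 1) h \<and> equivariant \<Gamma> \<tau> h \<and>
           (\<forall>n. smooth_on (ball 0 1) (hs n) \<and> concave_on (ball 0 1) (hs n) \<and>
                equivariant \<Gamma> (\<tau>s n) (hs n)) \<and>
           (\<forall>x\<in>ball 0 1. (\<lambda>n. hs n x) \<longlonglongrightarrow> h x) \<and>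
           (\<forall>i j. \<forall>x\<in>ball 0 1. (\<lambda>n. iter_partial [i, j] (hs n) x) \<longlonglongrightarrow> iter_partial [i, j] h x)))"
proof -
  obtain r where "cocompact_klein_group \<Gamma> r"
    using cocompact_fundamental_radius[OF assms(2,5)] assms(2,4)
    by (metis cocompact_klein_group.intro cocompact_klein_group_axioms.intro discrete_klein_group.intro)
  then interpret cocompact_klein_group \<Gamma> r .
  have convex: "smooth_equivariant_approximation \<Gamma> (convex_on (ball 0 1)) \<tau> \<tau>s"
    if "cocycle \<Gamma> \<tau>" "\<And>n. cocycle \<Gamma> (\<tau>s n)" "\<forall>A\<in>\<Gamma>. (\<lambda>n. \<tau>s n A) \<longlonglongrightarrow> \<tau> A" for \<tau> \<tau>s
    using that by (rule convex_smooth_equivariant_approximation)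
  have concave: "smooth_equivariant_approximation \<Gamma> (concave_on (ball 0 1)) \<tau> \<tau>s"
    if "cocycle \<Gamma> \<tau>" "\<And>n. cocycle \<Gamma> (\<tau>s n)" "\<forall>A\<in>\<Gamma>. (\<lambda>n. \<tau>s n A) \<longlonglongrightarrow> \<tau> A" for \<tau> \<tau>s
    using that(3) cocycle_uminus[OF assms(2)] that(1,2)
    by (intro concave_smooth_equivariant_approximation_uminus convex) (auto intro: tendsto_minus)
  have exists: "\<exists>h. smooth_on (ball 0 1) h \<and> P h \<and> equivariant \<Gamma> \<tau> h"
    if "smooth_equivariant_approximation \<Gamma> P \<tau> (\<lambda>_. \<tau>)" for P \<tau>
    using that unfolding smooth_equivariant_approximation_def by blast
  show ?thesis
    unfolding smooth_equivariant_approximation_def[symmetric]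
    using exists convex[of _ "\<lambda>_. _"] concave[of _ "\<lambda>_. _"] convex concave by simp
qed

end
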